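(* Fix integers $d_1,d_2\ge0$ and $a_1,a_2\ge0$, and let $(S_1,S_2)$ be a compatible pair on $D_{a_1,a_2}$ with $S_1(h)\le d_1$ for all $h\in D_1$ and $S_2(v)\le d_2$ for all $v\in D_2$. (a) If $0\le d_2a_2\le a_1$, then $(|S_1|,|S_2|)$ lies in the (possibly degenerate) trapezoid that is the convex hull of $(0,0)$, $(d_1a_1,0)$, $(0,d_2a_2)$, $(d_1a_1-d_1d_2a_2,d_2a_2)$. (b) If $0\le d_1a_1\le a_2$, then $(|S_1|,|S_2|)$ lies in the (possibly degenerate) trapezoid that is the convex hull of $(0,0)$, $(d_1a_1,0)$, $(0,d_2a_2)$, $(d_1a_1,d_2a_2-d_1d_2a_1)$. (c) If $0<a_1<d_2a_2$ and $0<a_2<d_1a_1$, then $(|S_1|,|S_2|)$ lies in the non-convex quadrilateral with corner vertices $(0,0)$, $(d_1a_1,0)$, $(a_2,a_1)$, $(0,d_2a_2)$ (closed region bounded by the polygon $(0,0)\to(d_1a_1,0)\to(a_2,a_1)\to(0,d_2a_2)\to(0,0)$), where the boundary segments $[(0,0),(d_1a_1,0)]$ and $[(0,0),(0,d_2a_2)]$ are included while the boundary segments $((d_1a_1,0),(a_2,a_1)]$ and $((0,d_2a_2),(a_2,a_1)]$ are excluded.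
   Context: Maximal Dyck path: $D=D_{a_1,a_2}$ is the lattice path of unit East and North steps from $(0,0)$ to $(a_1,a_2)$ staying weakly below the diagonal of $[0,a_1]\times[0,a_2]$ and closest to it. $D_1$, $D_2$ are its sets of horizontal and vertical edges. Identify $(0,0)\equiv(a_1,a_2)$ so $D$ is a cyclic sequence of edges; for edges $e,e'$, $ee'$ is the subpath from $e$ to $e'$ inclusive following $D$ cyclically, and $(ee')_1,(ee')_2$ are its horizontal and vertical edges. Gradings $S_1:D_1\to\mathbb{Z}_{\ge0}$, $S_2:D_2\to\mathbb{Z}_{\ge0}$ form a compatible pair if for every $h\in D_1$, $v\in D_2$ there is an edge $e$ with either $he$ a proper subpath of $hv$ and $|(he)_2|=\sum_{h'\in(he)_1}S_1(h')$, or $ev$ a proper subpath of $hv$ and $|(ev)_1|=\sum_{v'\in(ev)_2}S_2(v')$. $|S_i|$ denotes the sum of the values of $S_i$. *)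

theory Defs
  imports "HOL-Analysis.Analysis"
begin

text \<open>The maximal Dyck path D_{a1,a2} as a word of steps (True = East, False = North).
  For a1 > 0, the i-th East step (i = 0..a1-1) is followed by the North steps raising the
  height from floor(a2*i/a1) to floor(a2*(i+1)/a1); this is the highest lattice path
  weakly below the diagonal.\<close>
definition dyck_word :: "nat \<Rightarrow> nat \<Rightarrow> bool list" where
  "dyck_word a1 a2 =
     (if a1 = 0 then replicate a2 False
      else concat (map (\<lambda>i. True # replicate (a2 * (i + 1) div a1 - a2 * i div a1) False) [0..<a1]))"

text \<open>Edges are indexed by their position 0..<a1+a2 along the path.\<close>
definition D1 :: "nat \<Rightarrow> nat \<Rightarrow> nat set" where
  "D1 a1 a2 = {i. i < a1 + a2 \<and> dyck_word a1 a2 ! i}"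

definition D2 :: "nat \<Rightarrow> nat \<Rightarrow> nat set" where
  "D2 a1 a2 = {i. i < a1 + a2 \<and> \<not> dyck_word a1 a2 ! i}"

text \<open>Cyclic subpath from edge i to edge j (inclusive) in a cycle of n edges.\<close>
definition cyc :: "nat \<Rightarrow> nat \<Rightarrow> nat \<Rightarrow> nat set" where
  "cyc n i j = {(i + k) mod n | k. k \<le> (j + n - i) mod n}"

definition compatible_pair :: "nat \<Rightarrow> nat \<Rightarrow> (nat \<Rightarrow> nat) \<Rightarrow> (nat \<Rightarrow> nat) \<Rightarrow> bool" where
  "compatible_pair a1 a2 S1 S2 \<longleftrightarrow>
     (\<forall>h \<in> D1 a1 a2. \<forall>v \<in> D2 a1 a2. \<exists>e.
        (e \<in> cyc (a1 + a2) h v \<and> e \<noteq> v \<and>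
           card (cyc (a1 + a2) h e \<inter> D2 a1 a2) = (\<Sum>h' \<in> cyc (a1 + a2) h e \<inter> D1 a1 a2. S1 h'))
      \<or> (e \<in> cyc (a1 + a2) h v \<and> e \<noteq> h \<and>
           card (cyc (a1 + a2) e v \<inter> D1 a1 a2) = (\<Sum>v' \<in> cyc (a1 + a2) e v \<inter> D2 a1 a2. S2 v')))"

definition grading_size1 :: "nat \<Rightarrow> nat \<Rightarrow> (nat \<Rightarrow> nat) \<Rightarrow> nat" where
  "grading_size1 a1 a2 S1 = (\<Sum>h \<in> D1 a1 a2. S1 h)"

definition grading_size2 :: "nat \<Rightarrow> nat \<Rightarrow> (nat \<Rightarrow> nat) \<Rightarrow> nat" where
  "grading_size2 a1 a2 S2 = (\<Sum>v \<in> D2 a1 a2. S2 v)"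

end

theory Submission
  imports Defs
begin

text \<open>
  Unroll the maximal Dyck path into a bi-infinite periodic word: position \<open>i\<close> is an East step
  iff \<open>a2 * i mod (a1 + a2) < a1\<close>.  On this word the compatibility condition says that for an
  East step \<open>h\<close> and a later North step \<open>v\<close> some prefix of \<open>[h, v]\<close> has as many North steps as
  \<open>S1\<close>-weight, or some suffix has as many East steps as \<open>S2\<close>-weight.

  For (a) and (b): if \<open>d2 * a2 \<le> a1\<close>, every North step \<open>v\<close> is preceded by at least \<open>S2 v\<close>
  consecutive East steps, and compatibility forces \<open>S1 = 0\<close> on them; these zero East steps
  are distinct for distinct pairs, so \<open>|S1| \<le> d1 (a1 - |S2|)\<close>.  (b) is (a) for the reversed path.

  For (c): follow the walk which gains \<open>S2 v\<close> at each North step and loses one at each East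
  step.  Call an East step \<open>h\<close> covered if the walk started at \<open>h\<close> becomes positive within one
  period.  The first such time closes a block; by compatibility a prefix of the block is balanced,
  and since the path stays within one lattice step of the diagonal this gives
  \<open>a1 * (S1-weight of the block) < a2 * (East steps of the block)\<close>.  Blocks are nested or
  disjoint, the walk drops at every uncovered East step, so at most \<open>max 0 (a1 - |S2|)\<close> East steps
  are uncovered.  Summing yields \<open>a1 |S1| < d1 a1 (a1 - m) + a2 m\<close> for some \<open>m \<ge> min |S2| a1\<close>,
  and the same for the reversed path; together these cut out the quadrilateral.
\<close>

section \<open>The maximal Dyck path as a word\<close>

lemma concat_blocks_nth:
  fixes f :: "nat \<Rightarrow> nat"
  assumes mono: "mono f" and f0: "f 0 = 0"
  shows "length (concat (map (\<lambda>i. True # replicate (f (i + 1) - f i) False) [0..<m])) = m + f m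
    \<and> (\<forall>j < m + f m. concat (map (\<lambda>i. True # replicate (f (i + 1) - f i) False) [0..<m]) ! j
          = (\<exists>i<m. j = i + f i))"
proof (induction m)
  case 0
  then show ?case using f0 by simp
next
  case (Suc m)
  let ?B = "\<lambda>i. True # replicate (f (i + 1) - f i) False"
  let ?W = "concat (map ?B [0..<m])"
  have eq: "concat (map ?B [0..<Suc m]) = ?W @ ?B m" by simp
  have fm: "f m \<le> f (Suc m)" using mono by (simp add: monoD)
  have len: "length ?W = m + f m" using Suc.IH by blast
  have sm: "\<And>i. i < m \<Longrightarrow> i + f i < m + f m"
    using mono by (metis add_less_le_mono monoD order_less_imp_le)
  show ?case
  proof
    show "length (concat (map ?B [0..<Suc m])) = Suc m + f (Suc m)"
      using eq len fm by simp
    show "\<forall>j<Suc m + f (Suc m). concat (map ?B [0..<Suc m]) ! j = (\<exists>i<Suc m. j = i + f i)"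
    proof (intro allI impI)
      fix j assume j: "j < Suc m + f (Suc m)"
      show "concat (map ?B [0..<Suc m]) ! j = (\<exists>i<Suc m. j = i + f i)"
      proof (cases "j < m + f m")
        case True
        then have "concat (map ?B [0..<Suc m]) ! j = ?W ! j" using eq len by (simp add: nth_append)
        also have "\<dots> = (\<exists>i<m. j = i + f i)" using Suc.IH True by blast
        also have "\<dots> = (\<exists>i<Suc m. j = i + f i)" using True less_Suc_eq by auto
        finally show ?thesis .
      next
        case False
        then have "concat (map ?B [0..<Suc m]) ! j = ?B m ! (j - (m + f m))"
          using eq len by (simp add: nth_append)
        also have "\<dots> = (j = m + f m)" using False j fm
          by (cases "j - (m + f m)") auto
        also have "\<dots> = (\<exists>i<Suc m. j = i + f i)" using False sm less_Suc_eq by fastforce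
        finally show ?thesis .
      qed
    qed
  qed
qed

lemma east_position_iff_mod:
  fixes a1 a2 j :: nat
  assumes a1: "0 < a1" and j: "j < a1 + a2"
  shows "(\<exists>i<a1. j = i + a2 * i div a1) \<longleftrightarrow> (a2 * j) mod (a1 + a2) < a1"
proof
  assume "\<exists>i<a1. j = i + a2 * i div a1"
  then obtain i where i: "i < a1" "j = i + a2 * i div a1" by blast
  define q where "q = a2 * i div a1"
  define \<rho> where "\<rho> = a2 * i mod a1"
  have d: "a2 * i = q * a1 + \<rho>" unfolding q_def \<rho>_def by simp
  have \<rho>: "\<rho> < a1" unfolding \<rho>_def using a1 by simp
  have "a2 * j = q * (a1 + a2) + \<rho>" using i(2) d unfolding q_def[symmetric]
    by (simp add: algebra_simps)
  then show "(a2 * j) mod (a1 + a2) < a1" using \<rho> by simp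
next
  assume h: "(a2 * j) mod (a1 + a2) < a1"
  define q where "q = a2 * j div (a1 + a2)"
  define \<rho> where "\<rho> = a2 * j mod (a1 + a2)"
  have d: "a2 * j = q * (a1 + a2) + \<rho>" unfolding q_def \<rho>_def by (metis div_mult_mod_eq)
  have "q * (a1 + a2) \<le> j * (a1 + a2)"
    using d by (metis add.commute le_add2 mult.commute mult_le_mono1 order_trans trans_le_add2 le_add1)
  then have qj: "q \<le> j" using a1 by simp
  define i where "i = j - q"
  have ai: "a2 * i = q * a1 + \<rho>" unfolding i_def using d qj
    by (simp add: diff_mult_distrib2 algebra_simps)
  have "a2 * i div a1 = q" using ai h unfolding \<rho>_def using a1 by simp
  then have ji: "j = i + a2 * i div a1" unfolding i_def using qj by simp
  have "i < a1"
  proof (rule ccontr)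
    assume "\<not> i < a1"
    then have "a2 * a1 \<le> a2 * i" by simp
    then have "a2 \<le> a2 * i div a1" using a1
      by (metis div_le_mono nonzero_mult_div_cancel_right not_gr_zero)
    then show False using ji j \<open>\<not> i < a1\<close> by linarith
  qed
  then show "\<exists>i<a1. j = i + a2 * i div a1" using ji by blast
qed

lemma dyck_word_nth:
  assumes j: "j < a1 + a2"
  shows "dyck_word a1 a2 ! j = ((a2 * j) mod (a1 + a2) < a1)"
proof (cases "a1 = 0")
  case True
  then show ?thesis using j by (simp add: dyck_word_def)
next
  case False
  have mono: "mono (\<lambda>i. a2 * i div a1)" by (rule monoI) (simp add: div_le_mono)
  have "a2 * a1 div a1 = a2" using False by simp
  then have jj: "j < a1 + (\<lambda>i. a2 * i div a1) a1" using j by simp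
  have "dyck_word a1 a2 ! j = (\<exists>i<a1. j = i + a2 * i div a1)"
    using concat_blocks_nth[OF mono, of a1] jj False unfolding dyck_word_def by simp
  then show ?thesis using east_position_iff_mod False j by simp
qed

section \<open>Sums over integer intervals and periodic functions\<close>

lemma sum_int_interval_split:
  fixes \<phi> :: "int \<Rightarrow> 'b::comm_monoid_add"
  assumes "a \<le> b" "b \<le> c"
  shows "(\<Sum>i\<in>{a..<c}. \<phi> i) = (\<Sum>i\<in>{a..<b}. \<phi> i) + (\<Sum>i\<in>{b..<c}. \<phi> i)"
proof -
  have "{a..<c} = {a..<b} \<union> {b..<c}" using assms by auto
  then show ?thesis by (simp add: sum.union_disjoint ivl_disj_int)
qed

lemma sum_int_interval_last:
  fixes \<phi> :: "int \<Rightarrow> 'b::comm_monoid_add"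
  assumes "a \<le> b"
  shows "(\<Sum>i\<in>{a..<b+1}. \<phi> i) = (\<Sum>i\<in>{a..<b}. \<phi> i) + \<phi> b"
  using sum_int_interval_split[of a b "b+1" \<phi>] assms
  by (simp add: atLeastLessThanPlusOne_atLeastAtMost_int)

lemma sum_int_interval_first:
  fixes \<phi> :: "int \<Rightarrow> 'b::comm_monoid_add"
  assumes "a < b"
  shows "(\<Sum>i\<in>{a..<b}. \<phi> i) = \<phi> a + (\<Sum>i\<in>{a+1..<b}. \<phi> i)"
  using sum_int_interval_split[of a "a+1" b \<phi>] assms
  by (simp add: atLeastLessThanPlusOne_atLeastAtMost_int)

lemma sum_int_interval_shift:
  fixes \<phi> :: "int \<Rightarrow> 'b::comm_monoid_add"
  shows "(\<Sum>i\<in>{a..<b}. \<phi> (i + t)) = (\<Sum>i\<in>{a+t..<b+t}. \<phi> i)"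
  by (rule sum.reindex_bij_witness[of _ "\<lambda>i. i - t" "\<lambda>i. i + t"]) auto

lemma sum_int_interval_reflect:
  fixes \<phi> :: "int \<Rightarrow> 'b::comm_monoid_add"
  shows "(\<Sum>i\<in>{p..<q+1}. \<phi> (- i)) = (\<Sum>i\<in>{- q..<- p+1}. \<phi> i)"
  by (rule sum.reindex_bij_witness[of _ "\<lambda>i. - i" "\<lambda>i. - i"]) auto

lemma sum_indicator_card:
  "finite S \<Longrightarrow> (\<Sum>h\<in>S. if P h then 1 else (0::int)) = int (card {h\<in>S. P h})"
  by (simp add: sum.If_cases Int_def)

lemma periodic_mod:
  fixes N :: int
  assumes per: "\<And>i. \<phi> (i + N) = \<phi> i"
  shows "\<phi> (i mod N) = \<phi> i"
proof -
  have mult: "\<phi> (j + k * N) = \<phi> j" for j k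
  proof (induction k rule: int_induct[where k=0])
    case (step1 k)
    have "\<phi> (j + (k + 1) * N) = \<phi> (j + k * N + N)" by (simp add: algebra_simps)
    then show ?case using per step1 by simp
  next
    case (step2 k)
    have "\<phi> (j + k * N) = \<phi> (j + (k - 1) * N + N)" by (simp add: algebra_simps)
    then show ?case using per step2 by simp
  qed simp
  show ?thesis using mult[of "i mod N" "i div N"] by simp
qed

lemma periodic_sum_period:
  fixes \<phi> :: "int \<Rightarrow> 'b::ab_group_add"
  assumes "\<And>i. \<phi> (i + N) = \<phi> i" and "0 \<le> N"
  shows "(\<Sum>i\<in>{a..<a+N}. \<phi> i) = (\<Sum>i\<in>{0..<N}. \<phi> i)"
proof (induction a rule: int_induct[where k=0])
  case base then show ?case by simp
next
  case (step1 k)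
  have "(\<Sum>i\<in>{k..<k+N+1}. \<phi> i) = \<phi> k + (\<Sum>i\<in>{k+1..<k+1+N}. \<phi> i)"
    using sum_int_interval_first[of k "k+N+1" \<phi>] assms(2) by (simp add: add.commute add.left_commute)
  moreover have "(\<Sum>i\<in>{k..<k+N+1}. \<phi> i) = (\<Sum>i\<in>{k..<k+N}. \<phi> i) + \<phi> k"
    using sum_int_interval_last[of k "k+N" \<phi>] assms by simp
  ultimately show ?case using step1 by (simp add: algebra_simps)
next
  case (step2 k)
  have "(\<Sum>i\<in>{k-1..<k+N}. \<phi> i) = \<phi> (k-1) + (\<Sum>i\<in>{k..<k+N}. \<phi> i)"
    using sum_int_interval_first[of "k-1" "k+N" \<phi>] assms(2) by simp
  moreover have "(\<Sum>i\<in>{k-1..<k+N}. \<phi> i) = (\<Sum>i\<in>{k-1..<k-1+N}. \<phi> i) + \<phi> (k - 1 + N)"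
    using sum_int_interval_last[of "k-1" "k-1+N" \<phi>] assms by simp
  moreover have "\<phi> (k - 1 + N) = \<phi> (k-1)" using assms(1) by simp
  ultimately show ?case using step2 by (simp add: algebra_simps)
qed

lemma periodic_sum_reflect:
  fixes \<phi> :: "int \<Rightarrow> 'b::ab_group_add"
  assumes "\<And>i. \<phi> (i + N) = \<phi> i" "0 < N"
  shows "(\<Sum>i\<in>{0..<N}. \<phi> (- i)) = (\<Sum>i\<in>{0..<N}. \<phi> i)"
proof -
  have "(\<Sum>i\<in>{0..<N}. \<phi> (- i)) = (\<Sum>i\<in>{1-N..<(1-N)+N}. \<phi> i)"
    using sum_int_interval_reflect[of \<phi> 0 "N - 1"] by simp
  also have "\<dots> = (\<Sum>i\<in>{0..<N}. \<phi> i)" using assms by (intro periodic_sum_period) auto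
  finally show ?thesis .
qed

lemma ex_int_interval_Suc_iff:
  fixes x :: int
  assumes "\<not> P x"
  shows "(\<exists>h. x \<le> h \<and> h < E \<and> P h) \<longleftrightarrow> (\<exists>h. x + 1 \<le> h \<and> h < E \<and> P h)"
proof
  assume "\<exists>h. x \<le> h \<and> h < E \<and> P h"
  then obtain h where h: "x \<le> h" "h < E" "P h" by blast
  with assms have "x + 1 \<le> h" by (cases "h = x") auto
  with h show "\<exists>h. x + 1 \<le> h \<and> h < E \<and> P h" by blast
next
  assume "\<exists>h. x + 1 \<le> h \<and> h < E \<and> P h"
  then obtain h where "x + 1 \<le> h" "h < E" "P h" by blast
  then show "\<exists>h. x \<le> h \<and> h < E \<and> P h" by (intro exI[of _ h]) simp
qed

lemma sum_nonneg_by_blocks: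
  fixes \<phi> :: "int \<Rightarrow> int"
  assumes "\<And>i. x \<le> i \<Longrightarrow> i < y \<Longrightarrow> \<exists>j. i \<le> j \<and> j < y \<and> 0 \<le> (\<Sum>k\<in>{i..<j+1}. \<phi> k)"
    and "x \<le> y"
  shows "0 \<le> (\<Sum>k\<in>{x..<y}. \<phi> k)"
  using assms
proof (induction "nat (y - x)" arbitrary: x rule: less_induct)
  case less
  show ?case
  proof (cases "x = y")
    case False
    then have xy: "x < y" using less.prems by simp
    obtain j where j: "x \<le> j" "j < y" "0 \<le> (\<Sum>k\<in>{x..<j+1}. \<phi> k)"
      using less.prems(1)[of x] xy by auto
    have "(\<Sum>k\<in>{x..<y}. \<phi> k) = (\<Sum>k\<in>{x..<j+1}. \<phi> k) + (\<Sum>k\<in>{j+1..<y}. \<phi> k)"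
      using sum_int_interval_split[of x "j+1" y] j by simp
    moreover have "0 \<le> (\<Sum>k\<in>{j+1..<y}. \<phi> k)"
      using less.hyps[of "j+1"] less.prems j by auto
    ultimately show ?thesis using j by simp
  qed simp
qed

section \<open>Periodic graded paths\<close>

text \<open>The chord inequality says that every segment of the word from an East to a North step stays
  within one lattice step of the diagonal.\<close>

locale periodic_graded_path =
  fixes N :: int and east :: "int \<Rightarrow> bool" and A B :: "int \<Rightarrow> int" and a1 a2 d1 :: int
  assumes N_pos: "0 < N"
    and east_periodic: "\<And>i. east (i + N) = east i"
    and A_periodic: "\<And>i. A (i + N) = A i" and B_periodic: "\<And>i. B (i + N) = B i"
    and A_nonneg: "\<And>i. 0 \<le> A i" and B_nonneg: "\<And>i. 0 \<le> B i"
    and A_north: "\<And>i. \<not> east i \<Longrightarrow> A i = 0" and B_east: "\<And>i. east i \<Longrightarrow> B i = 0"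
    and A_le: "\<And>i. A i \<le> d1"
    and a1_eq: "a1 = (\<Sum>i\<in>{0..<N}. if east i then 1 else 0)"
    and a2_eq: "a2 = N - a1"
    and compatible: "\<And>h m. east h \<Longrightarrow> \<not> east (h + m) \<Longrightarrow> 0 \<le> m \<Longrightarrow> m < N \<Longrightarrow>
        (\<exists>e. h \<le> e \<and> e < h + m \<and> (\<Sum>i\<in>{h..<e+1}. if east i then - A i else 1) = 0)
      \<or> (\<exists>e. h < e \<and> e \<le> h + m \<and> (\<Sum>i\<in>{e..<h+m+1}. if east i then 1 else - B i) = 0)"
    and chord: "\<And>p q. p \<le> q \<Longrightarrow> east p \<Longrightarrow> \<not> east q \<Longrightarrow>
        a1 * (\<Sum>i\<in>{p..<q+1}. if east i then 0 else 1)
          \<le> a2 * (\<Sum>i\<in>{p..<q+1}. if east i then 1 else 0) + a1 - 1"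
begin

lemma east_mod: "east (x mod N) = east x"
  by (rule periodic_mod[where \<phi>=east]) (rule east_periodic)

lemma A_mod: "A (x mod N) = A x"
  by (rule periodic_mod[where \<phi>=A]) (rule A_periodic)

lemma a1_nonneg: "0 \<le> a1"
  unfolding a1_eq by (rule sum_nonneg) simp

lemma sum_A_le: "(\<Sum>i\<in>{0..<N}. A i) \<le> d1 * a1"
proof -
  have "(\<Sum>i\<in>{0..<N}. A i) \<le> (\<Sum>h\<in>{0..<N}. d1 * (if east h then 1 else 0))"
    using A_le A_north by (intro sum_mono) auto
  then show ?thesis unfolding a1_eq by (simp add: sum_distrib_left)
qed

subsection \<open>The excess walk and covered East steps\<close>

definition excess_step :: "int \<Rightarrow> int" where
  "excess_step i = (if east i then -1 else B i)"

definition excess :: "int \<Rightarrow> int \<Rightarrow> int" where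
  "excess x y = (\<Sum>i\<in>{x+1..<y+1}. excess_step i)"

definition total_excess :: int where
  "total_excess = (\<Sum>i\<in>{0..<N}. excess_step i)"

definition balance_step :: "int \<Rightarrow> int" where
  "balance_step i = (if east i then - A i else 1)"

definition covered :: "int \<Rightarrow> bool" where
  "covered h \<longleftrightarrow> east h \<and> (\<exists>v. h < v \<and> v < h + N \<and> 0 < excess h v)"

definition cover_end :: "int \<Rightarrow> int" where
  "cover_end h = h + int (LEAST k::nat. 0 < k \<and> 0 < excess h (h + int k))"

lemma excess_step_periodic: "excess_step (i + N) = excess_step i"
  unfolding excess_step_def using east_periodic B_periodic by simp

lemma excess_self: "excess x x = 0"
  unfolding excess_def by simp

lemma excess_trans: "x \<le> y \<Longrightarrow> y \<le> z \<Longrightarrow> excess x z = excess x y + excess y z"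
  unfolding excess_def using sum_int_interval_split[of "x+1" "y+1" "z+1" excess_step] by simp

lemma excess_last: "x \<le> y \<Longrightarrow> excess x (y + 1) = excess x y + excess_step (y + 1)"
  unfolding excess_def using sum_int_interval_last[of "x+1" "y+1" excess_step] by simp

lemma excess_periodic: "excess (x + N) (y + N) = excess x y"
proof -
  have "excess x y = (\<Sum>i\<in>{x+1..<y+1}. excess_step (i + N))"
    unfolding excess_def using excess_step_periodic by simp
  also have "\<dots> = excess (x + N) (y + N)"
    unfolding excess_def by (subst sum_int_interval_shift) (simp add: algebra_simps)
  finally show ?thesis by simp
qed

lemma excess_period: "excess x (x + N) = total_excess"
  unfolding excess_def total_excess_def
  using periodic_sum_period[of excess_step N "x+1"] excess_step_periodic N_pos
  by (simp add: algebra_simps)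

lemma total_excess_eq: "total_excess = (\<Sum>i\<in>{0..<N}. B i) - a1"
proof -
  have "total_excess = (\<Sum>i\<in>{0..<N}. B i - (if east i then 1 else 0))"
    unfolding total_excess_def excess_step_def using B_east by (intro sum.cong) auto
  then show ?thesis unfolding a1_eq by (simp add: sum_subtractf)
qed

lemma covered_east: "covered h \<Longrightarrow> east h"
  unfolding covered_def by simp

lemma covered_periodic: "covered (h + N) = covered h"
proof
  assume "covered (h + N)"
  then obtain v where v: "east (h + N)" "h + N < v" "v < h + N + N" "0 < excess (h + N) v"
    unfolding covered_def by blast
  have "excess (h + N) v = excess h (v - N)" using excess_periodic[of h "v - N"] by simp
  then show "covered h"
    unfolding covered_def using v east_periodic by (intro conjI exI[of _ "v - N"]) auto
next
  assume "covered h"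
  then obtain v where v: "east h" "h < v" "v < h + N" "0 < excess h v"
    unfolding covered_def by blast
  then show "covered (h + N)"
    unfolding covered_def using excess_periodic[of h v] east_periodic
    by (intro conjI exI[of _ "v + N"]) auto
qed

lemma covered_mod: "covered (h mod N) = covered h"
  by (rule periodic_mod[where \<phi>=covered]) (rule covered_periodic)

lemma cover_end_periodic: "cover_end (h + N) = cover_end h + N"
proof -
  have "excess (h + N) (h + N + int k) = excess h (h + int k)" for k
    using excess_periodic[of h "h + int k"] by (simp add: add.commute add.left_commute)
  then show ?thesis unfolding cover_end_def by simp
qed

lemma cover_length_mod: "cover_end (h mod N) - h mod N = cover_end h - h"
  by (rule periodic_mod[where \<phi>="\<lambda>h. cover_end h - h"]) (simp add: cover_end_periodic)

lemma cover_end_spec: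
  assumes "covered h"
  shows "h < cover_end h" "cover_end h < h + N" "0 < excess h (cover_end h)"
    "\<And>x. h \<le> x \<Longrightarrow> x < cover_end h \<Longrightarrow> excess h x \<le> 0"
proof -
  obtain v where v: "h < v" "v < h + N" "0 < excess h v" using assms unfolding covered_def by blast
  let ?P = "\<lambda>k::nat. 0 < k \<and> 0 < excess h (h + int k)"
  have Pv: "?P (nat (v - h))" using v by simp
  have PL: "?P (LEAST k. ?P k)" by (rule LeastI[of ?P, OF Pv])
  have Lle: "(LEAST k. ?P k) \<le> nat (v - h)" by (rule Least_le[of ?P, OF Pv])
  show "h < cover_end h" using PL unfolding cover_end_def by simp
  show "cover_end h < h + N" using Lle v unfolding cover_end_def by linarith
  show "0 < excess h (cover_end h)" using PL unfolding cover_end_def by simp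
  fix x assume x: "h \<le> x" "x < cover_end h"
  show "excess h x \<le> 0"
  proof (cases "x = h")
    case True then show ?thesis by (simp add: excess_self)
  next
    case False
    have "nat (x - h) < (LEAST k. ?P k)" using x unfolding cover_end_def by linarith
    then have "\<not> ?P (nat (x - h))" by (rule not_less_Least)
    then show ?thesis using False x by simp
  qed
qed

lemma north_cover_end:
  assumes "covered h"
  shows "\<not> east (cover_end h)"
proof -
  have "excess h (cover_end h) = excess h (cover_end h - 1) + excess_step (cover_end h)"
    using excess_last[of h "cover_end h - 1"] cover_end_spec[OF assms] by simp
  moreover have "excess h (cover_end h - 1) \<le> 0" using cover_end_spec[OF assms] by simp
  ultimately have "0 < excess_step (cover_end h)" using cover_end_spec(3)[OF assms] by simp
  then show ?thesis unfolding excess_step_def by (auto split: if_splits)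
qed

lemma covered_nested:
  assumes "covered h" "h < h'" "h' < cover_end h" "east h'"
  shows "covered h'" "cover_end h' \<le> cover_end h"
proof -
  have "excess h (cover_end h) = excess h h' + excess h' (cover_end h)"
    using excess_trans[of h h' "cover_end h"] assms by simp
  moreover have "excess h h' \<le> 0" using cover_end_spec(4)[OF assms(1)] assms by simp
  ultimately have pos: "0 < excess h' (cover_end h)" using cover_end_spec(3)[OF assms(1)] by simp
  show "covered h'" unfolding covered_def using assms cover_end_spec(2)[OF assms(1)] pos
    by (intro conjI exI[of _ "cover_end h"]) auto
  let ?P = "\<lambda>k::nat. 0 < k \<and> 0 < excess h' (h' + int k)"
  have "?P (nat (cover_end h - h'))" using pos assms by simp
  then have "(LEAST k. ?P k) \<le> nat (cover_end h - h')" by (rule Least_le)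
  then have "int (LEAST k. ?P k) \<le> cover_end h - h'" using assms(3) by linarith
  then show "cover_end h' \<le> cover_end h" by (simp add: cover_end_def[of h'])
qed

lemma covered_iff_east_within_cover:
  assumes "covered x" "x \<le> h" "h \<le> cover_end x"
  shows "covered h \<longleftrightarrow> east h"
proof (cases "h = x \<or> h = cover_end x")
  case True
  then show ?thesis using assms(1) covered_east north_cover_end[OF assms(1)] by blast
next
  case False
  then show ?thesis using assms covered_east covered_nested(1)[OF assms(1), of h] by auto
qed

text \<open>The suffix alternative of compatibility is impossible here: the walk from \<open>h\<close> is \<open>\<le> 0\<close>
  strictly before \<open>cover_end h\<close> and positive at it, so no suffix of the block has excess \<open>0\<close>.\<close>

lemma balanced_prefix_in_cover:
  assumes "covered h"
  shows "\<exists>e. h \<le> e \<and> e < cover_end h \<and> (\<Sum>i\<in>{h..<e+1}. balance_step i) = 0"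
proof -
  let ?v = "cover_end h"
  have "\<not> (\<exists>e. h < e \<and> e \<le> ?v \<and> (\<Sum>i\<in>{e..<?v+1}. if east i then 1 else - B i) = 0)"
  proof
    assume "\<exists>e. h < e \<and> e \<le> ?v \<and> (\<Sum>i\<in>{e..<?v+1}. if east i then 1 else - B i) = 0"
    then obtain e where e: "h < e" "e \<le> ?v" "(\<Sum>i\<in>{e..<?v+1}. if east i then 1 else - B i) = 0"
      by auto
    have "(\<Sum>i\<in>{e..<?v+1}. if east i then 1 else - B i) = - excess (e - 1) ?v"
      unfolding excess_def excess_step_def sum_negf[symmetric] by (rule sum.cong) auto
    then have z: "excess (e - 1) ?v = 0" using e by simp
    have "excess h ?v = excess h (e - 1) + excess (e - 1) ?v"
      using excess_trans[of h "e - 1" ?v] e by simp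
    moreover have "excess h (e - 1) \<le> 0" using cover_end_spec(4)[OF assms, of "e - 1"] e by simp
    ultimately show False using z cover_end_spec(3)[OF assms] by simp
  qed
  moreover have "(\<exists>e. h \<le> e \<and> e < ?v \<and> (\<Sum>i\<in>{h..<e+1}. if east i then - A i else 1) = 0)
    \<or> (\<exists>e. h < e \<and> e \<le> ?v \<and> (\<Sum>i\<in>{e..<?v+1}. if east i then 1 else - B i) = 0)"
    using compatible[of h "?v - h"] covered_east[OF assms] north_cover_end[OF assms]
      cover_end_spec[OF assms] by simp
  ultimately show ?thesis unfolding balance_step_def by auto
qed

text \<open>Each East step of the block starts a sub-block with a balanced prefix, so the block minus its
  final North step has at least as many North steps as \<open>A\<close>-weight; the chord inequality for the
  whole block then gives the strict bound.\<close>

lemma cover_block_bound: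
  assumes "covered h0"
  shows "a1 * (\<Sum>i\<in>{h0..<cover_end h0+1}. A i)
    \<le> a2 * (\<Sum>i\<in>{h0..<cover_end h0+1}. if east i then 1 else 0) - 1"
proof -
  let ?v = "cover_end h0"
  have hv0: "h0 < ?v" using cover_end_spec[OF assms] by simp
  have "0 \<le> (\<Sum>k\<in>{h0..<?v}. balance_step k)"
  proof (rule sum_nonneg_by_blocks)
    fix i assume i: "h0 \<le> i" "i < ?v"
    show "\<exists>j. i \<le> j \<and> j < ?v \<and> 0 \<le> (\<Sum>k\<in>{i..<j+1}. balance_step k)"
    proof (cases "east i")
      case False
      then show ?thesis using i
        by (intro exI[of _ i]) (simp add: balance_step_def atLeastLessThanPlusOne_atLeastAtMost_int)
    next
      case True
      have hi: "covered i \<and> cover_end i \<le> ?v"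
        using assms covered_nested[OF assms, of i] i True by (cases "i = h0") auto
      then obtain e where "i \<le> e" "e < cover_end i" "(\<Sum>k\<in>{i..<e+1}. balance_step k) = 0"
        using balanced_prefix_in_cover by blast
      then show ?thesis using hi by (intro exI[of _ e]) simp
    qed
  qed (use hv0 in simp)
  moreover have "(\<Sum>k\<in>{h0..<?v}. balance_step k)
      = (\<Sum>k\<in>{h0..<?v}. if east k then 0 else 1) - (\<Sum>k\<in>{h0..<?v}. A k)"
    unfolding balance_step_def using A_north by (auto simp: sum_subtractf[symmetric] intro!: sum.cong)
  ultimately have s1: "(\<Sum>k\<in>{h0..<?v}. A k) \<le> (\<Sum>k\<in>{h0..<?v}. if east k then 0 else 1)" by simp
  have eA: "(\<Sum>k\<in>{h0..<?v+1}. A k) = (\<Sum>k\<in>{h0..<?v}. A k)"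
    using sum_int_interval_last[of h0 ?v A] hv0 A_north[OF north_cover_end[OF assms]] by simp
  have eV: "(\<Sum>k\<in>{h0..<?v+1}. if east k then 0 else 1)
      = (\<Sum>k\<in>{h0..<?v}. if east k then 0 else 1) + (1::int)"
    using sum_int_interval_last[of h0 ?v "\<lambda>k. if east k then 0 else (1::int)"] hv0
      north_cover_end[OF assms] by simp
  have ch: "a1 * (\<Sum>i\<in>{h0..<?v+1}. if east i then 0 else 1)
      \<le> a2 * (\<Sum>i\<in>{h0..<?v+1}. if east i then 1 else 0) + a1 - 1"
    using chord[of h0 ?v] hv0 covered_east[OF assms] north_cover_end[OF assms] by simp
  have "a1 * (\<Sum>k\<in>{h0..<?v+1}. A k) \<le> a1 * ((\<Sum>k\<in>{h0..<?v+1}. if east k then 0 else 1) - 1)"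
    using s1 eA eV a1_nonneg by (simp add: mult_left_mono)
  then show ?thesis using ch by (simp add: algebra_simps)
qed

lemma exists_longest_cover:
  assumes "covered h"
  shows "\<exists>h0. covered h0 \<and> (\<forall>h. covered h \<longrightarrow> cover_end h - h \<le> cover_end h0 - h0)"
proof -
  define S where "S = {h\<in>{0..<N}. covered h}"
  have "h mod N \<in> S" unfolding S_def using assms covered_mod[of h] N_pos by simp
  moreover have "finite S" unfolding S_def by (rule finite_subset[of _ "{0..<N}"]) auto
  ultimately have fS: "finite S" "S \<noteq> {}" by auto
  have "Max ((\<lambda>h. cover_end h - h) ` S) \<in> (\<lambda>h. cover_end h - h) ` S"
    using fS by (intro Max_in) auto
  then obtain h0 where h0: "h0 \<in> S" "cover_end h0 - h0 = Max ((\<lambda>h. cover_end h - h) ` S)"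
    by fastforce
  have "cover_end h - h \<le> cover_end h0 - h0" if "covered h" for h
  proof -
    have "h mod N \<in> S" unfolding S_def using that N_pos covered_mod[of h] by simp
    then have "cover_end (h mod N) - h mod N \<le> Max ((\<lambda>h. cover_end h - h) ` S)"
      using fS by (intro Max_ge) auto
    then show ?thesis using cover_length_mod[of h] h0 by simp
  qed
  then show ?thesis using h0(1) unfolding S_def by blast
qed

text \<open>A window of one period that no block crosses: start right after the end of a longest block.\<close>

lemma exists_cut: "\<exists>c0. \<forall>h. c0 \<le> h \<longrightarrow> h < c0 + N \<longrightarrow> covered h \<longrightarrow> cover_end h < c0 + N"
proof (cases "\<exists>h. covered h")
  case True
  then obtain h0 where h0: "covered h0" and longest: "\<And>h. covered h \<Longrightarrow> cover_end h - h \<le> cover_end h0 - h0"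
    using exists_longest_cover by blast
  have i1: "covered (h0 + N)" using h0 covered_periodic by simp
  have v1: "cover_end (h0 + N) = cover_end h0 + N" by (rule cover_end_periodic)
  show ?thesis
  proof (intro exI[of _ "cover_end h0 + 1"] allI impI)
    fix h assume h: "cover_end h0 + 1 \<le> h" "h < cover_end h0 + 1 + N" "covered h"
    consider "h < h0 + N" | "h = h0 + N" | "h0 + N < h" by linarith
    then show "cover_end h < cover_end h0 + 1 + N"
    proof cases
      case 1
      then show ?thesis using longest[OF h(3)] h(1) by linarith
    next
      case 2
      then show ?thesis using v1 h(3) covered_east north_cover_end[OF i1] by auto
    next
      case 3
      have "h \<noteq> cover_end (h0 + N)" using covered_east[OF h(3)] north_cover_end[OF i1] by auto
      then have "h < cover_end (h0 + N)" using h(2) v1 by simp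
      then show ?thesis
        using covered_nested(2)[OF i1 3 _ covered_east[OF h(3)]] v1 by simp
    qed
  qed
qed blast

lemma covered_sum_bound:
  assumes cut: "\<forall>h. c0 \<le> h \<longrightarrow> h < c0 + N \<longrightarrow> covered h \<longrightarrow> cover_end h < c0 + N"
  shows "c0 \<le> x \<Longrightarrow> x \<le> c0 + N \<Longrightarrow>
    a1 * (\<Sum>h\<in>{x..<c0+N}. if covered h then A h else 0)
      + (if \<exists>h. x \<le> h \<and> h < c0 + N \<and> covered h then 1 else 0)
    \<le> a2 * (\<Sum>h\<in>{x..<c0+N}. if covered h then 1 else 0)"
proof (induction "nat (c0 + N - x)" arbitrary: x rule: less_induct)
  case less
  let ?E = "c0 + N"
  let ?cA = "\<lambda>h. if covered h then A h else 0" and ?c1 = "\<lambda>h. if covered h then 1 else (0::int)"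
  show ?case
  proof (cases "x = ?E")
    case False
    then have xE: "x < ?E" using less.prems by simp
    show ?thesis
    proof (cases "covered x")
      case False
      have "(\<exists>h. x \<le> h \<and> h < ?E \<and> covered h) = (\<exists>h. x + 1 \<le> h \<and> h < ?E \<and> covered h)"
        using ex_int_interval_Suc_iff[of covered] False .
      then show ?thesis
        using less.hyps[of "x+1"] less.prems xE False
          sum_int_interval_first[of x ?E ?cA] sum_int_interval_first[of x ?E ?c1] by simp
    next
      case True
      let ?v = "cover_end x"
      have xv: "x < ?v" "?v < ?E" using cover_end_spec(1)[OF True] cut less.prems xE True by auto
      have IH: "a1 * (\<Sum>h\<in>{?v+1..<?E}. ?cA h) + (if \<exists>h. ?v + 1 \<le> h \<and> h < ?E \<and> covered h then 1 else 0)
        \<le> a2 * (\<Sum>h\<in>{?v+1..<?E}. ?c1 h)"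
        using less.hyps[of "?v+1"] less.prems xv by simp
      have "(\<Sum>h\<in>{x..<?v+1}. ?cA h) = (\<Sum>h\<in>{x..<?v+1}. A h)"
        using covered_iff_east_within_cover[OF True] A_north by (intro sum.cong) auto
      moreover have "(\<Sum>h\<in>{x..<?v+1}. ?c1 h) = (\<Sum>h\<in>{x..<?v+1}. if east h then 1 else 0)"
        using covered_iff_east_within_cover[OF True] by (intro sum.cong) auto
      moreover have "(\<Sum>h\<in>{x..<?E}. ?cA h) = (\<Sum>h\<in>{x..<?v+1}. ?cA h) + (\<Sum>h\<in>{?v+1..<?E}. ?cA h)"
        using sum_int_interval_split[of x "?v+1" ?E] xv by simp
      moreover have "(\<Sum>h\<in>{x..<?E}. ?c1 h) = (\<Sum>h\<in>{x..<?v+1}. ?c1 h) + (\<Sum>h\<in>{?v+1..<?E}. ?c1 h)"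
        using sum_int_interval_split[of x "?v+1" ?E] xv by simp
      moreover have "\<exists>h. x \<le> h \<and> h < ?E \<and> covered h" using True xE by auto
      ultimately show ?thesis using IH cover_block_bound[OF True]
        by (simp add: algebra_simps split: if_splits)
    qed
  qed simp
qed

definition covered_count :: int where
  "covered_count = (\<Sum>h\<in>{0..<N}. if covered h then 1 else 0)"

definition covered_weight :: int where
  "covered_weight = (\<Sum>h\<in>{0..<N}. if covered h then A h else 0)"

lemma covered_weight_bound:
  assumes "0 < covered_count"
  shows "a1 * covered_weight + 1 \<le> a2 * covered_count"
proof -
  obtain c0 where cut: "\<forall>h. c0 \<le> h \<longrightarrow> h < c0 + N \<longrightarrow> covered h \<longrightarrow> cover_end h < c0 + N"
    using exists_cut by blast
  have e1: "(\<Sum>h\<in>{c0..<c0+N}. if covered h then A h else 0) = covered_weight"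
    unfolding covered_weight_def
    by (rule periodic_sum_period) (simp_all add: covered_periodic A_periodic N_pos less_imp_le)
  have e2: "(\<Sum>h\<in>{c0..<c0+N}. if covered h then 1 else 0) = covered_count"
    unfolding covered_count_def
    by (rule periodic_sum_period) (simp_all add: covered_periodic N_pos less_imp_le)
  have "\<exists>h. c0 \<le> h \<and> h < c0 + N \<and> covered h"
  proof (rule ccontr)
    assume "\<not> ?thesis"
    then have "(\<Sum>h\<in>{c0..<c0+N}. if covered h then 1 else (0::int)) = 0" by (intro sum.neutral) auto
    then show False using e2 assms by simp
  qed
  then show ?thesis using covered_sum_bound[OF cut, of c0] N_pos e1 e2 by simp
qed

subsection \<open>Uncovered East steps\<close>

lemma excess_drop_at_uncovered:
  assumes "east h" "\<not> covered h" "h < v" "v \<le> h + N" "east v"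
  shows "excess h v \<le> -1"
proof -
  have "excess h (v - 1) \<le> 0"
  proof (cases "v - 1 = h")
    case False
    have "h < v - 1" "v - 1 < h + N" using False assms(3,4) by auto
    then show ?thesis using assms(2) covered_east assms(1) unfolding covered_def by (meson not_less)
  qed (simp add: excess_self)
  then show ?thesis using excess_last[of h "v - 1"] assms unfolding excess_step_def by simp
qed

lemma uncovered_excess_gap:
  assumes "east h" "\<not> covered h" "east h'" "\<not> covered h'" "0 \<le> h" "h < h'" "h' < N"
  shows "excess 0 h' \<le> excess 0 h - 1" "excess 0 h + total_excess + 1 \<le> excess 0 h'"
proof -
  have "excess 0 h' = excess 0 h + excess h h'" using excess_trans[of 0 h h'] assms by simp
  moreover have "excess h h' \<le> -1" using excess_drop_at_uncovered[of h h'] assms by simp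
  ultimately show "excess 0 h' \<le> excess 0 h - 1" by simp
  have "excess 0 (h + N) = excess 0 N + excess N (h + N)"
    using excess_trans[of 0 N "h + N"] assms N_pos by simp
  also have "\<dots> = total_excess + excess 0 h"
    using excess_periodic[of 0 h] excess_period[of 0] by simp
  finally have "excess 0 (h + N) = total_excess + excess 0 h" .
  moreover have "excess 0 (h + N) = excess 0 h' + excess h' (h + N)"
    using excess_trans[of 0 h' "h + N"] assms by simp
  moreover have "excess h' (h + N) \<le> -1"
    using excess_drop_at_uncovered[of h' "h + N"] assms east_periodic by simp
  ultimately show "excess 0 h + total_excess + 1 \<le> excess 0 h'" by simp
qed

text \<open>The values of \<open>excess 0\<close> at the uncovered East steps of \<open>[0, N)\<close> are distinct and lie in a
  window of length \<open>- total_excess\<close>.\<close>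

lemma card_uncovered_le: "int (card {h\<in>{0..<N}. east h \<and> \<not> covered h}) \<le> max 0 (- total_excess)"
proof (cases "{h\<in>{0..<N}. east h \<and> \<not> covered h} = {}")
  case True
  then show ?thesis unfolding True by simp
next
  case False
  define U where "U = {h\<in>{0..<N}. east h \<and> \<not> covered h}"
  have fin: "finite U" unfolding U_def by (rule finite_subset[of _ "{0..<N}"]) auto
  define h1 where "h1 = Min U"
  have h1: "h1 \<in> U" unfolding h1_def using fin False U_def by (intro Min_in) auto
  have h1_le: "\<And>h. h \<in> U \<Longrightarrow> h1 \<le> h" unfolding h1_def using fin by simp
  have total: "total_excess \<le> -1"
    using excess_drop_at_uncovered[of h1 "h1 + N"] h1 N_pos east_periodic excess_period[of h1]
    unfolding U_def by simp
  let ?Q = "\<lambda>h. excess 0 h"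
  have inj: "inj_on ?Q U"
  proof (rule inj_onI)
    fix h h' assume a: "h \<in> U" "h' \<in> U" "?Q h = ?Q h'"
    show "h = h'"
    proof (rule ccontr)
      assume "h \<noteq> h'"
      then consider "h < h'" | "h' < h" by linarith
      then show False
        using uncovered_excess_gap(1)[of h h'] uncovered_excess_gap(1)[of h' h] a
        unfolding U_def by cases auto
    qed
  qed
  have "?Q ` U \<subseteq> {?Q h1 + total_excess + 1 .. ?Q h1}"
  proof
    fix y assume "y \<in> ?Q ` U"
    then obtain h where h: "h \<in> U" "y = ?Q h" by blast
    show "y \<in> {?Q h1 + total_excess + 1 .. ?Q h1}"
    proof (cases "h = h1")
      case False
      then have "h1 < h" using h1_le[OF h(1)] by simp
      then show ?thesis using uncovered_excess_gap[of h1 h] h h1 unfolding U_def by auto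
    qed (use h total in simp)
  qed
  then have "card U \<le> card {?Q h1 + total_excess + 1 .. ?Q h1}"
    by (rule card_inj_on_le[OF inj]) simp
  then have "card U \<le> nat (- total_excess)" by simp
  then show ?thesis unfolding U_def using total by linarith
qed

lemma covered_count_bounds:
  shows "min (\<Sum>i\<in>{0..<N}. B i) a1 \<le> covered_count" "covered_count \<le> a1"
    and "(\<Sum>i\<in>{0..<N}. A i) - covered_weight \<le> d1 * (a1 - covered_count)"
proof -
  let ?u = "\<lambda>h. if east h \<and> \<not> covered h then 1 else (0::int)"
  have split: "covered_count + (\<Sum>h\<in>{0..<N}. ?u h) = a1"
    unfolding covered_count_def a1_eq sum.distrib[symmetric] using covered_east
    by (intro sum.cong) auto
  have "(\<Sum>h\<in>{0..<N}. ?u h) \<le> max 0 (a1 - (\<Sum>i\<in>{0..<N}. B i))"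
    using card_uncovered_le total_excess_eq by (simp add: sum_indicator_card)
  then show "min (\<Sum>i\<in>{0..<N}. B i) a1 \<le> covered_count" using split by linarith
  have "0 \<le> (\<Sum>h\<in>{0..<N}. ?u h)" by (rule sum_nonneg) simp
  then show "covered_count \<le> a1" using split by linarith
  have "(\<Sum>i\<in>{0..<N}. A i) - covered_weight = (\<Sum>h\<in>{0..<N}. if east h \<and> \<not> covered h then A h else 0)"
    unfolding covered_weight_def sum_subtractf[symmetric] using A_north covered_east
    by (intro sum.cong) auto
  also have "\<dots> \<le> (\<Sum>h\<in>{0..<N}. d1 * ?u h)"
    using A_le A_nonneg by (intro sum_mono) auto
  also have "\<dots> = d1 * (a1 - covered_count)"
    using split by (simp add: sum_distrib_left[symmetric])
  finally show "(\<Sum>i\<in>{0..<N}. A i) - covered_weight \<le> d1 * (a1 - covered_count)" .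
qed

lemma sum_A_bound_by_covering:
  assumes "0 < a1" and "0 < (\<Sum>i\<in>{0..<N}. B i)"
  shows "\<exists>m. min (\<Sum>i\<in>{0..<N}. B i) a1 \<le> m \<and> m \<le> a1 \<and>
     a1 * (\<Sum>i\<in>{0..<N}. A i) \<le> d1 * a1 * (a1 - m) + a2 * m - 1"
proof (intro exI conjI)
  let ?m = covered_count
  have "0 < ?m" using covered_count_bounds(1) assms by linarith
  then have "a1 * covered_weight + 1 \<le> a2 * ?m" by (rule covered_weight_bound)
  moreover have "a1 * ((\<Sum>i\<in>{0..<N}. A i) - covered_weight) \<le> a1 * (d1 * (a1 - ?m))"
    using covered_count_bounds(3) assms(1) by (intro mult_left_mono) auto
  ultimately show "a1 * (\<Sum>i\<in>{0..<N}. A i) \<le> d1 * a1 * (a1 - ?m) + a2 * ?m - 1"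
    by (simp add: algebra_simps)
qed (use covered_count_bounds in auto)

subsection \<open>Long runs of East steps\<close>

definition east_runs :: bool where
  "east_runs \<longleftrightarrow> (\<forall>v j. \<not> east v \<longrightarrow> 1 \<le> j \<longrightarrow> j \<le> B v \<longrightarrow> east (v - j))"

lemma east_runsD: "east_runs \<Longrightarrow> \<not> east v \<Longrightarrow> 1 \<le> j \<Longrightarrow> j \<le> B v \<Longrightarrow> east (v - j)"
  unfolding east_runs_def by blast

lemma B_lt_N_if_east_runs:
  assumes "east_runs" "\<not> east v"
  shows "B v < N"
proof (rule ccontr)
  assume "\<not> B v < N"
  then have "east (v - N)" using east_runsD[OF assms] N_pos by simp
  then show False using assms(2) east_periodic[of "v - N"] by simp
qed

text \<open>Compatibility for the window from \<open>v - j\<close> to \<open>v\<close>: its suffix alternative would need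
  \<open>B v\<close> East steps before \<open>v\<close> but fewer than \<open>j\<close> are available, so a prefix of East steps has
  \<open>A\<close>-weight \<open>0\<close>.\<close>

lemma A_zero_on_east_run:
  assumes runs: "east_runs" and v: "\<not> east v" "1 \<le> j" "j \<le> B v"
  shows "A (v - j) = 0"
proof -
  let ?h = "v - j"
  have all_east: "east i" if "?h \<le> i" "i < v" for i
    using east_runsD[OF runs v(1), of "v - i"] v that by simp
  have "(\<exists>e. ?h \<le> e \<and> e < ?h + j \<and> (\<Sum>i\<in>{?h..<e+1}. if east i then - A i else 1) = 0)
    \<or> (\<exists>e. ?h < e \<and> e \<le> ?h + j \<and> (\<Sum>i\<in>{e..<?h+j+1}. if east i then 1 else - B i) = 0)"
    using compatible[of ?h j] all_east[of ?h] v B_lt_N_if_east_runs[OF runs v(1)] by simp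
  then show "A ?h = 0"
  proof
    assume "\<exists>e. ?h \<le> e \<and> e < ?h + j \<and> (\<Sum>i\<in>{?h..<e+1}. if east i then - A i else 1) = 0"
    then obtain e where e: "?h \<le> e" "e < v" "(\<Sum>i\<in>{?h..<e+1}. if east i then - A i else 1) = 0"
      by auto
    have "(\<Sum>i\<in>{?h..<e+1}. if east i then - A i else 1) = - (\<Sum>i\<in>{?h..<e+1}. A i)"
      unfolding sum_negf[symmetric] using all_east e by (intro sum.cong) auto
    then have "(\<Sum>i\<in>{?h..<e+1}. A i) = 0" using e by simp
    moreover have "A ?h \<le> (\<Sum>i\<in>{?h..<e+1}. A i)" using e A_nonneg by (intro member_le_sum) auto
    ultimately show ?thesis using A_nonneg[of ?h] by simp
  next
    assume "\<exists>e. ?h < e \<and> e \<le> ?h + j \<and> (\<Sum>i\<in>{e..<?h+j+1}. if east i then 1 else - B i) = 0"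
    then obtain e where e: "?h < e" "e \<le> v" "(\<Sum>i\<in>{e..<v+1}. if east i then 1 else - B i) = 0"
      by auto
    have "(\<Sum>i\<in>{e..<v+1}. if east i then 1 else - B i) = (\<Sum>i\<in>{e..<v}. if east i then 1 else - B i) - B v"
      using sum_int_interval_last[of e v "\<lambda>i. if east i then 1 else - B i"] e v by simp
    also have "(\<Sum>i\<in>{e..<v}. if east i then 1 else - B i) = (\<Sum>i\<in>{e..<v}. 1)"
      using all_east e by (intro sum.cong) auto
    also have "\<dots> = v - e" using e by simp
    finally show ?thesis using e v by simp
  qed
qed

text \<open>If \<open>j < j'\<close>, then \<open>v \<equiv> v' - (j' - j)\<close> lies in the run of East steps before \<open>v'\<close>, yet \<open>v\<close> is a
  North step.\<close>

lemma east_run_pairs_eq: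
  assumes runs: "east_runs"
    and "\<not> east v" "1 \<le> j" "j \<le> B v" "\<not> east v'" "1 \<le> j'" "j' \<le> B v'"
    and "(v - j) mod N = (v' - j') mod N" "j \<le> j'"
  shows "v mod N = v' mod N \<and> j = j'"
proof -
  have cong: "v mod N = (v' - j' + j) mod N"
    using mod_add_cong[OF assms(8), of j j] by simp
  have "j = j'"
  proof (rule ccontr)
    assume "j \<noteq> j'"
    then have "east (v' - (j' - j))" using east_runsD[OF runs, of v' "j' - j"] assms by simp
    then have "east (v' - j' + j)" by (simp add: algebra_simps)
    then have "east v" using cong by (metis east_mod)
    then show False using assms(2) by simp
  qed
  then show ?thesis using cong by simp
qed

text \<open>The pairs \<open>(v, j)\<close> with \<open>v\<close> a North step and \<open>1 \<le> j \<le> B v\<close> inject into the East steps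
  with \<open>A = 0\<close> via \<open>(v, j) \<mapsto> (v - j) mod N\<close>.\<close>

lemma sum_B_le_zero_A_count:
  assumes runs: "east_runs"
  shows "(\<Sum>i\<in>{0..<N}. B i) \<le> (\<Sum>h\<in>{0..<N}. if east h \<and> A h = 0 then 1 else 0)"
proof -
  define V where "V = {v\<in>{0..<N}. \<not> east v}"
  define Z where "Z = Sigma V (\<lambda>v. {1..B v})"
  define Z0 where "Z0 = {h\<in>{0..<N}. east h \<and> A h = 0}"
  have "finite V" unfolding V_def by (rule finite_subset[of _ "{0..<N}"]) auto
  then have "int (card Z) = (\<Sum>v\<in>V. B v)"
    unfolding Z_def using B_nonneg by (simp add: card_SigmaI)
  also have "\<dots> = (\<Sum>v\<in>{0..<N}. B v)"
    unfolding V_def by (rule sum.mono_neutral_left) (auto simp: B_east)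
  finally have card_Z: "int (card Z) = (\<Sum>i\<in>{0..<N}. B i)" .
  let ?\<psi> = "\<lambda>p. (fst p - snd p) mod N"
  have "?\<psi> ` Z \<subseteq> Z0"
  proof
    fix y assume "y \<in> ?\<psi> ` Z"
    then obtain v j where vj: "\<not> east v" "1 \<le> j" "j \<le> B v" "y = (v - j) mod N"
      unfolding Z_def V_def by auto
    then have "east (v - j)" "A (v - j) = 0"
      using east_runsD[OF runs] A_zero_on_east_run[OF runs] by auto
    then show "y \<in> Z0" unfolding Z0_def using vj east_mod A_mod N_pos by simp
  qed
  moreover have "inj_on ?\<psi> Z"
  proof (rule inj_onI)
    fix p q assume pq: "p \<in> Z" "q \<in> Z" "?\<psi> p = ?\<psi> q"
    obtain v j where p: "p = (v, j)" "\<not> east v" "1 \<le> j" "j \<le> B v" "0 \<le> v" "v < N"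
      using pq(1) unfolding Z_def V_def by auto
    obtain v' j' where q: "q = (v', j')" "\<not> east v'" "1 \<le> j'" "j' \<le> B v'" "0 \<le> v'" "v' < N"
      using pq(2) unfolding Z_def V_def by auto
    have e: "(v - j) mod N = (v' - j') mod N" using pq(3) p q by simp
    have "v mod N = v' mod N \<and> j = j'"
    proof (cases "j \<le> j'")
      case True
      then show ?thesis using east_run_pairs_eq[OF runs p(2-4) q(2-4) e] by blast
    next
      case False
      then show ?thesis using east_run_pairs_eq[OF runs q(2-4) p(2-4) e[symmetric]] by simp
    qed
    then show "p = q" using p q by simp
  qed
  moreover have "finite Z0" unfolding Z0_def by (rule finite_subset[of _ "{0..<N}"]) auto
  ultimately have "card Z \<le> card Z0" by (intro card_inj_on_le)
  then show ?thesis using card_Z unfolding Z0_def by (simp add: sum_indicator_card)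
qed

lemma sum_A_bound_by_runs:
  assumes "east_runs"
  shows "(\<Sum>i\<in>{0..<N}. A i) \<le> d1 * (a1 - (\<Sum>i\<in>{0..<N}. B i))"
proof -
  let ?z = "\<lambda>h. if east h \<and> A h = 0 then 1 else (0::int)"
  let ?nz = "\<lambda>h. if east h \<and> A h \<noteq> 0 then 1 else (0::int)"
  have split: "a1 = (\<Sum>h\<in>{0..<N}. ?z h) + (\<Sum>h\<in>{0..<N}. ?nz h)"
    unfolding a1_eq by (auto simp: sum.distrib[symmetric] intro!: sum.cong)
  have d1_nonneg: "0 \<le> d1" using A_nonneg[of 0] A_le[of 0] by simp
  have "(\<Sum>i\<in>{0..<N}. A i) \<le> (\<Sum>h\<in>{0..<N}. d1 * ?nz h)"
    using A_le A_north by (intro sum_mono) auto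
  also have "\<dots> = d1 * (\<Sum>h\<in>{0..<N}. ?nz h)" by (simp add: sum_distrib_left)
  also have "\<dots> \<le> d1 * (a1 - (\<Sum>i\<in>{0..<N}. B i))"
    using split sum_B_le_zero_A_count[OF assms] d1_nonneg by (intro mult_left_mono) auto
  finally show ?thesis .
qed

subsection \<open>Reversing the path\<close>

lemma count_north_reflect: "a2 = (\<Sum>i\<in>{0..<N}. if \<not> east (- i) then 1 else 0)"
proof -
  have "(\<Sum>i\<in>{0..<N}. if \<not> east (- i) then 1 else (0::int)) = (\<Sum>i\<in>{0..<N}. if \<not> east i then 1 else 0)"
    by (rule periodic_sum_reflect[where \<phi>="\<lambda>i. if \<not> east i then 1 else (0::int)"])
      (use east_periodic N_pos in auto)
  also have "\<dots> = (\<Sum>i\<in>{0..<N}. 1 - (if east i then 1 else 0))" by (intro sum.cong) auto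
  also have "\<dots> = N - a1" unfolding a1_eq using N_pos by (simp add: sum_subtractf)
  finally show ?thesis using a2_eq by simp
qed

lemma compatible_reflect:
  assumes "\<not> east (- h)" "\<not> \<not> east (- (h + m))" "0 \<le> m" "m < N"
  shows "(\<exists>e. h \<le> e \<and> e < h + m \<and> (\<Sum>i\<in>{h..<e+1}. if \<not> east (- i) then - B (- i) else 1) = 0)
    \<or> (\<exists>e. h < e \<and> e \<le> h + m \<and> (\<Sum>i\<in>{e..<h+m+1}. if \<not> east (- i) then 1 else - A (- i)) = 0)"
proof -
  have if_swap: "(if \<not> P then x else y) = (if P then y else x)" for P and x y :: int by simp
  let ?h = "- h - m"
  have "(\<exists>e. ?h \<le> e \<and> e < ?h + m \<and> (\<Sum>i\<in>{?h..<e+1}. if east i then - A i else 1) = 0)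
    \<or> (\<exists>e. ?h < e \<and> e \<le> ?h + m \<and> (\<Sum>i\<in>{e..<?h+m+1}. if east i then 1 else - B i) = 0)"
    using compatible[of ?h m] assms by (simp add: algebra_simps)
  then show ?thesis
  proof
    assume "\<exists>e. ?h \<le> e \<and> e < ?h + m \<and> (\<Sum>i\<in>{?h..<e+1}. if east i then - A i else 1) = 0"
    then obtain e where e: "?h \<le> e" "e < ?h + m" "(\<Sum>i\<in>{?h..<e+1}. if east i then - A i else 1) = 0"
      by blast
    have "(\<Sum>i\<in>{- e..<h+m+1}. if \<not> east (- i) then 1 else - A (- i))
        = (\<Sum>i\<in>{?h..<e+1}. if east i then - A i else 1)"
      using sum_int_interval_reflect[of "\<lambda>i. if east i then - A i else 1" "- e" "h+m"]
      by (simp add: algebra_simps if_swap cong: if_cong)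
    then show ?thesis using e by (intro disjI2 exI[of _ "- e"]) auto
  next
    assume "\<exists>e. ?h < e \<and> e \<le> ?h + m \<and> (\<Sum>i\<in>{e..<?h+m+1}. if east i then 1 else - B i) = 0"
    then obtain e where e: "?h < e" "e \<le> ?h + m" "(\<Sum>i\<in>{e..<?h+m+1}. if east i then 1 else - B i) = 0"
      by blast
    have "(\<Sum>i\<in>{h..<- e+1}. if \<not> east (- i) then - B (- i) else 1)
        = (\<Sum>i\<in>{e..<?h+m+1}. if east i then 1 else - B i)"
      using sum_int_interval_reflect[of "\<lambda>i. if east i then 1 else - B i" h "- e"]
      by (simp add: algebra_simps if_swap cong: if_cong)
    then show ?thesis using e by (intro disjI1 exI[of _ "- e"]) auto
  qed
qed

end

text \<open>Reading the path backwards swaps the roles of East and North steps; the chord inequality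
  for the reversed path is the other half of the path being closest to the diagonal.\<close>

lemma periodic_graded_path_reflect:
  assumes "periodic_graded_path N east A B a1 a2 d1"
    and B_le: "\<And>i. B i \<le> d2"
    and chord': "\<And>p q. p \<le> q \<Longrightarrow> east p \<Longrightarrow> \<not> east q \<Longrightarrow>
      a2 * (\<Sum>i\<in>{p..<q+1}. if east i then 1 else 0)
        \<le> a1 * (\<Sum>i\<in>{p..<q+1}. if east i then 0 else 1) + a2 - 1"
  shows "periodic_graded_path N (\<lambda>i. \<not> east (- i)) (\<lambda>i. B (- i)) (\<lambda>i. A (- i)) a2 a1 d2"
proof -
  interpret periodic_graded_path N east A B a1 a2 d1 by (rule assms(1))
  have if_swap: "(if \<not> P then x else y) = (if P then y else x)" for P and x y :: int by simp
  have reflect_periodic: "\<phi> (- (i + N)) = \<phi> (- i)" if "\<And>i. \<phi> (i + N) = \<phi> i" for \<phi> :: "int \<Rightarrow> 'a" and i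
    using that[of "- (i + N)"] by simp
  show ?thesis
  proof (unfold_locales)
    show "\<And>i. (\<not> east (- (i + N))) = (\<not> east (- i))" using reflect_periodic east_periodic by blast
    show "\<And>i. B (- (i + N)) = B (- i)" using reflect_periodic B_periodic by blast
    show "\<And>i. A (- (i + N)) = A (- i)" using reflect_periodic A_periodic by blast
    show "a1 = N - a2" using a2_eq by simp
  next
    fix p q assume "p \<le> q" "\<not> east (- p)" "\<not> \<not> east (- q)"
    then have "a2 * (\<Sum>i\<in>{- q..<- p+1}. if east i then 1 else 0)
        \<le> a1 * (\<Sum>i\<in>{- q..<- p+1}. if east i then 0 else 1) + a2 - 1"
      using chord'[of "- q" "- p"] by simp
    then show "a2 * (\<Sum>i\<in>{p..<q+1}. if \<not> east (- i) then 0 else 1)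
        \<le> a1 * (\<Sum>i\<in>{p..<q+1}. if \<not> east (- i) then 1 else 0) + a2 - 1"
      using sum_int_interval_reflect[of "\<lambda>i. if east i then 1 else (0::int)" p q]
        sum_int_interval_reflect[of "\<lambda>i. if east i then 0 else (1::int)" p q]
      by (simp add: if_swap cong: if_cong)
  next
    fix h m assume "\<not> east (- h)" "\<not> \<not> east (- (h + m))" "0 \<le> m" "m < N"
    then show "(\<exists>e. h \<le> e \<and> e < h + m \<and> (\<Sum>i\<in>{h..<e+1}. if \<not> east (- i) then - B (- i) else 1) = 0)
      \<or> (\<exists>e. h < e \<and> e \<le> h + m \<and> (\<Sum>i\<in>{e..<h+m+1}. if \<not> east (- i) then 1 else - A (- i)) = 0)"
      by (rule compatible_reflect)
  qed (simp_all add: N_pos A_nonneg B_nonneg A_north B_east B_le count_north_reflect)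
qed

section \<open>The periodic word of the maximal Dyck path\<close>

text \<open>If \<open>(x, y)\<close> is the lattice point reached after \<open>i\<close> steps, then \<open>a2 x - a1 y \<equiv> a2 i\<close> modulo
  \<open>a1 + a2\<close>.  On the maximal Dyck path \<open>a2 x - a1 y\<close> stays in \<open>[0, a1 + a2)\<close>, so it equals
  \<open>dyck_gap a1 a2 i\<close>, and step \<open>i\<close> goes East iff this gap is below \<open>a1\<close>.\<close>

definition dyck_gap :: "nat \<Rightarrow> nat \<Rightarrow> int \<Rightarrow> int" where
  "dyck_gap a1 a2 i = (int a2 * i) mod int (a1 + a2)"

definition dyck_east :: "nat \<Rightarrow> nat \<Rightarrow> int \<Rightarrow> bool" where
  "dyck_east a1 a2 i \<longleftrightarrow> dyck_gap a1 a2 i < int a1"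

definition grading1_ext :: "nat \<Rightarrow> nat \<Rightarrow> (nat \<Rightarrow> nat) \<Rightarrow> int \<Rightarrow> int" where
  "grading1_ext a1 a2 S1 i = (if dyck_east a1 a2 i then int (S1 (nat (i mod int (a1 + a2)))) else 0)"

definition grading2_ext :: "nat \<Rightarrow> nat \<Rightarrow> (nat \<Rightarrow> nat) \<Rightarrow> int \<Rightarrow> int" where
  "grading2_ext a1 a2 S2 i = (if dyck_east a1 a2 i then 0 else int (S2 (nat (i mod int (a1 + a2)))))"

text \<open>Positions \<open>h, \<dots>, h + k\<close> of the periodic word, as a cyclic subpath of the Dyck path.\<close>

definition dyck_window :: "nat \<Rightarrow> nat \<Rightarrow> int \<Rightarrow> nat \<Rightarrow> nat set" where
  "dyck_window a1 a2 h k =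
     cyc (a1 + a2) (nat (h mod int (a1 + a2))) (nat ((h + int k) mod int (a1 + a2)))"

lemma cyc_eq_image:
  assumes "a < n" "k < n"
  shows "cyc n a ((a + k) mod n) = (\<lambda>t. (a + t) mod n) ` {0..k}"
proof -
  have "((a + k) mod n + n - a) mod n = k"
  proof (cases "a + k < n")
    case True
    then have "(a + k) mod n + n - a = k + n" by simp
    then show ?thesis using assms by simp
  next
    case False
    then have "(a + k) mod n = a + k - n" using assms by (simp add: mod_if)
    then have "(a + k) mod n + n - a = k" using False by simp
    then show ?thesis using assms by simp
  qed
  then show ?thesis unfolding cyc_def by auto
qed

lemma inj_on_add_mod:
  fixes a k n :: nat
  assumes "k < n"
  shows "inj_on (\<lambda>t. (a + t) mod n) {0..k}"
proof (rule inj_onI)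
  fix t t' assume tt: "t \<in> {0..k}" "t' \<in> {0..k}" "(a + t) mod n = (a + t') mod n"
  have "(int a + int t) mod int n = (int a + int t') mod int n"
    using arg_cong[OF tt(3), of int] by (simp add: of_nat_mod)
  then have d: "int n dvd (int a + int t) - (int a + int t')" by (simp add: mod_eq_dvd_iff)
  show "t = t'"
  proof (rule ccontr)
    assume "t \<noteq> t'"
    then have "\<bar>int n\<bar> \<le> \<bar>(int a + int t) - (int a + int t')\<bar>" using d by (intro dvd_imp_le_int) auto
    then show False using tt assms by auto
  qed
qed

lemma sum_cyc_inter:
  assumes "a < n" "k < n"
  shows "(\<Sum>x\<in>cyc n a ((a + k) mod n) \<inter> D. w x)
    = (\<Sum>t\<in>{0..k}. if (a + t) mod n \<in> D then w ((a + t) mod n) else 0)"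
proof -
  have "(\<Sum>x\<in>cyc n a ((a + k) mod n) \<inter> D. w x)
      = (\<Sum>x\<in>(\<lambda>t. (a + t) mod n) ` {0..k}. if x \<in> D then w x else 0)"
    unfolding cyc_eq_image[OF assms] by (rule sum.inter_restrict) simp
  also have "\<dots> = (\<Sum>t\<in>{0..k}. if (a + t) mod n \<in> D then w ((a + t) mod n) else 0)"
    by (subst sum.reindex[OF inj_on_add_mod[OF assms(2)]]) simp
  finally show ?thesis .
qed

lemma sum_atLeastAtMost_nat_int:
  fixes \<phi> :: "nat \<Rightarrow> 'b::comm_monoid_add"
  shows "(\<Sum>t\<in>{0..k}. \<phi> t) = (\<Sum>i\<in>{h..<h + int k + 1}. \<phi> (nat (i - h)))"
  by (rule sum.reindex_bij_witness[of _ "\<lambda>i. nat (i - h)" "\<lambda>t. h + int t"]) auto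

locale dyck_path =
  fixes a1 a2 :: nat
  assumes len_pos: "0 < a1 + a2"
begin

abbreviation "len \<equiv> int (a1 + a2)"
abbreviation "east \<equiv> dyck_east a1 a2"
abbreviation "gap \<equiv> dyck_gap a1 a2"
abbreviation "window \<equiv> dyck_window a1 a2"

lemma len_gt_0: "0 < len"
  using len_pos by linarith

lemma gap_range: "0 \<le> gap i" "gap i < len"
  unfolding dyck_gap_def using len_gt_0 by auto

lemma dyck_east_periodic: "east (i + len) = east i"
proof -
  have "(int a2 * (i + len)) mod len = (int a2 * i + int a2 * len) mod len" by (simp only: distrib_left)
  also have "\<dots> = (int a2 * i) mod len" by (rule mod_mult_self1)
  finally show ?thesis unfolding dyck_east_def dyck_gap_def by simp
qed

lemma dyck_east_mod: "east (x mod len) = east x"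
  by (rule periodic_mod[where \<phi>="dyck_east a1 a2"]) (rule dyck_east_periodic)

lemma gap_step_east: "east i \<Longrightarrow> gap (i + 1) = gap i + int a2"
proof -
  assume h: "east i"
  have "gap (i + 1) = (gap i + int a2) mod len"
    unfolding dyck_gap_def by (simp add: distrib_left mod_add_left_eq)
  moreover have "gap i + int a2 < len" using h unfolding dyck_east_def by simp
  ultimately show ?thesis using gap_range[of i] by simp
qed

lemma gap_step_north: "\<not> east i \<Longrightarrow> gap (i + 1) = gap i - int a1"
proof -
  assume h: "\<not> east i"
  have "gap (i + 1) = (gap i + int a2) mod len"
    unfolding dyck_gap_def by (simp add: distrib_left mod_add_left_eq)
  also have "\<dots> = (gap i - int a1 + 1 * len) mod len" by simp
  also have "\<dots> = (gap i - int a1) mod len" by (rule mod_mult_self1)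
  also have "\<dots> = gap i - int a1" using h gap_range[of i] unfolding dyck_east_def by simp
  finally show ?thesis .
qed

lemma gap_telescope:
  "p \<le> q \<Longrightarrow> gap q - gap p = int a2 * (\<Sum>i\<in>{p..<q}. if east i then 1 else 0)
    - int a1 * (\<Sum>i\<in>{p..<q}. if east i then 0 else 1)"
proof (induction q rule: int_ge_induct)
  case (step q)
  then show ?case
    using sum_int_interval_last[of p q "\<lambda>i. if east i then 1 else (0::int)"]
      sum_int_interval_last[of p q "\<lambda>i. if east i then 0 else (1::int)"]
      gap_step_east[of q] gap_step_north[of q]
    by (cases "east q") (simp_all add: algebra_simps)
qed simp

lemma dyck_chord_lower: "p \<le> q \<Longrightarrow> east p \<Longrightarrow> \<not> east q \<Longrightarrow>
    int a1 * (\<Sum>i\<in>{p..<q+1}. if east i then 0 else 1)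
      \<le> int a2 * (\<Sum>i\<in>{p..<q+1}. if east i then 1 else 0) + int a1 - 1"
  using gap_telescope[of p "q+1"] gap_range[of "q+1"] unfolding dyck_east_def by simp

lemma dyck_chord_upper: "p \<le> q \<Longrightarrow> east p \<Longrightarrow> \<not> east q \<Longrightarrow>
    int a2 * (\<Sum>i\<in>{p..<q+1}. if east i then 1 else 0)
      \<le> int a1 * (\<Sum>i\<in>{p..<q+1}. if east i then 0 else 1) + int a2 - 1"
  using gap_telescope[of p "q+1"] gap_range[of p] gap_step_north[of q] gap_range[of q] by simp

lemma dyck_east_count: "(\<Sum>i\<in>{0..<len}. if east i then 1 else 0) = int a1"
proof -
  let ?H = "(\<Sum>i\<in>{0..<len}. if east i then 1 else (0::int))"
  let ?V = "(\<Sum>i\<in>{0..<len}. if east i then 0 else (1::int))"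
  have "gap len - gap 0 = int a2 * ?H - int a1 * ?V" using gap_telescope[of 0 len] len_gt_0 by simp
  moreover have "gap len = gap 0" unfolding dyck_gap_def by simp
  moreover have "?H + ?V = len"
    by (simp add: sum.distrib[symmetric]) (simp add: if_distrib cong: if_cong)
  ultimately have balance: "int a1 * ?V = int a2 * ?H" and total: "?H + ?V = len" by simp_all
  have "len * ?H = int a1 * ?H + int a2 * ?H" by (simp add: distrib_right)
  also have "\<dots> = int a1 * (?H + ?V)" using balance by (simp add: distrib_left)
  also have "\<dots> = len * int a1" using total by simp
  finally show ?thesis using len_gt_0 by simp
qed

text \<open>When \<open>d2 a2 \<le> a1\<close>, going back \<open>j \<le> d2\<close> steps from a North step lowers the gap by
  \<open>a2 j \<le> a1\<close> without wrapping around, so it lands on an East step.\<close>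

lemma dyck_east_before_north:
  assumes "int d2 * int a2 \<le> int a1" "\<not> east v" "1 \<le> j" "j \<le> int d2"
  shows "east (v - j)"
proof -
  have rv: "int a1 \<le> gap v" using assms(2) unfolding dyck_east_def by simp
  have "int a2 * j \<le> int a2 * int d2" using assms(4) by (intro mult_left_mono) auto
  then have aj: "int a2 * j \<le> int a1" using assms(1) by (simp add: mult.commute)
  have "gap (v - j) = (gap v - int a2 * j) mod len"
    unfolding dyck_gap_def by (simp add: right_diff_distrib mod_diff_left_eq)
  also have "\<dots> = gap v - int a2 * j"
  proof -
    have "0 \<le> int a2 * j" using assms(3) by simp
    then show ?thesis using rv aj gap_range[of v] by (intro mod_pos_pos_trivial) auto
  qed
  finally have "gap (v - j) = gap v - int a2 * j" .
  moreover have "int a2 \<le> int a2 * j" using assms(3) by (simp add: mult_le_cancel_left1)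
  ultimately show ?thesis using gap_range[of v] unfolding dyck_east_def by linarith
qed

lemma dyck_north_after_east:
  assumes "int d1 * int a1 \<le> int a2" "east h" "1 \<le> j" "j \<le> int d1"
  shows "\<not> east (h + j)"
proof -
  have rh: "gap h < int a1" using assms(2) unfolding dyck_east_def by simp
  have "int a1 * j \<le> int a1 * int d1" using assms(4) by (intro mult_left_mono) auto
  then have aj: "int a1 * j \<le> int a2" using assms(1) by (simp add: mult.commute)
  have "gap (h + j) = (gap h + int a2 * j) mod len"
    unfolding dyck_gap_def by (simp add: distrib_left mod_add_left_eq)
  also have "\<dots> = (gap h - int a1 * j + len + (j - 1) * len) mod len" by (simp add: algebra_simps)
  also have "\<dots> = (gap h - int a1 * j + len) mod len" by (rule mod_mult_self1)
  also have "\<dots> = gap h - int a1 * j + len"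
  proof (rule mod_pos_pos_trivial)
    show "0 \<le> gap h - int a1 * j + len" using aj gap_range[of h] by simp
    have "int a1 \<le> int a1 * j" using assms(3) by (simp add: mult_le_cancel_left1)
    then show "gap h - int a1 * j + len < len" using rh by simp
  qed
  finally show ?thesis using aj gap_range[of h] unfolding dyck_east_def by simp
qed

lemma dyck_east_of_nat: "east (int x) = ((a2 * x) mod (a1 + a2) < a1)"
proof -
  have "int ((a2 * x) mod (a1 + a2)) = (int a2 * int x) mod int (a1 + a2)"
    by (simp only: of_nat_mod of_nat_mult)
  then show ?thesis unfolding dyck_east_def dyck_gap_def by (metis of_nat_less_iff)
qed

lemma D1_eq: "D1 a1 a2 = {j. j < a1 + a2 \<and> east (int j)}"
  unfolding D1_def using dyck_word_nth dyck_east_of_nat by auto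

lemma D2_eq: "D2 a1 a2 = {j. j < a1 + a2 \<and> \<not> east (int j)}"
  unfolding D2_def using dyck_word_nth dyck_east_of_nat by auto

lemma nat_mod_len_less: "nat (h mod len) < a1 + a2"
proof -
  have "0 \<le> h mod len" "h mod len < len" using len_gt_0 by simp_all
  then show ?thesis by (simp add: nat_less_iff)
qed

lemma int_nat_mod_len: "int (nat (i mod len)) = i mod len"
  using len_gt_0 by simp

lemma nat_mod_len_add:
  "nat ((h + int t) mod len) = (nat (h mod len) + t) mod (a1 + a2)"
proof -
  have "int ((nat (h mod len) + t) mod (a1 + a2)) = (int (nat (h mod len)) + int t) mod len"
    by (simp add: of_nat_mod)
  also have "\<dots> = (h + int t) mod len" unfolding int_nat_mod_len by (simp add: mod_add_left_eq)
  finally show ?thesis by (metis nat_int)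
qed

lemma dyck_window_eq_image:
  assumes "k < a1 + a2"
  shows "window h k = (\<lambda>t. nat ((h + int t) mod len)) ` {0..k}"
  unfolding dyck_window_def nat_mod_len_add using cyc_eq_image[OF nat_mod_len_less assms] by simp

lemma sum_dyck_window:
  fixes w :: "nat \<Rightarrow> nat" and P :: "int \<Rightarrow> bool"
  assumes P_mod: "\<And>x. P (x mod len) = P x" and k: "k < a1 + a2"
  shows "int (\<Sum>x\<in>window h k \<inter> {j. j < a1 + a2 \<and> P (int j)}. w x)
    = (\<Sum>i\<in>{h..<h + int k + 1}. if P i then int (w (nat (i mod len))) else 0)"
proof -
  let ?n = "a1 + a2" and ?a = "nat (h mod len)"
  have a: "?a < ?n" by (rule nat_mod_len_less)
  have "(\<Sum>x\<in>window h k \<inter> {j. j < ?n \<and> P (int j)}. w x)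
      = (\<Sum>t\<in>{0..k}. if (?a + t) mod ?n \<in> {j. j < ?n \<and> P (int j)} then w ((?a + t) mod ?n) else 0)"
    unfolding dyck_window_def nat_mod_len_add by (rule sum_cyc_inter[OF a k])
  also have "\<dots> = (\<Sum>t\<in>{0..k}. if P (h + int t) then w (nat ((h + int t) mod len)) else 0)"
  proof (rule sum.cong)
    fix t assume "t \<in> {0..k}"
    have m: "(?a + t) mod ?n = nat ((h + int t) mod len)" by (rule nat_mod_len_add[symmetric])
    then have "int ((?a + t) mod ?n) = (h + int t) mod len" using len_gt_0 by simp
    then have "P (int ((?a + t) mod ?n)) = P (h + int t)" using P_mod by simp
    moreover have "(?a + t) mod ?n < ?n" using len_pos by simp
    ultimately show "(if (?a + t) mod ?n \<in> {j. j < ?n \<and> P (int j)} then w ((?a + t) mod ?n) else 0)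
        = (if P (h + int t) then w (nat ((h + int t) mod len)) else 0)" using m by simp
  qed simp
  finally have "int (\<Sum>x\<in>window h k \<inter> {j. j < ?n \<and> P (int j)}. w x)
      = (\<Sum>t\<in>{0..k}. if P (h + int t) then int (w (nat ((h + int t) mod len))) else 0)"
    by (simp add: of_nat_sum if_distrib cong: if_cong)
  also have "\<dots> = (\<Sum>i\<in>{h..<h + int k + 1}. if P i then int (w (nat (i mod len))) else 0)"
    by (subst sum_atLeastAtMost_nat_int[of _ k h]) (intro sum.cong, auto)
  finally show ?thesis .
qed

lemma dyck_window_sums:
  fixes h :: int and f g :: "nat \<Rightarrow> nat"
  assumes k: "k < a1 + a2"
  shows "int (card (window h k \<inter> D1 a1 a2)) = (\<Sum>i\<in>{h..<h + int k + 1}. if east i then 1 else 0)"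
    and "int (card (window h k \<inter> D2 a1 a2)) = (\<Sum>i\<in>{h..<h + int k + 1}. if east i then 0 else 1)"
    and "int (\<Sum>x\<in>window h k \<inter> D1 a1 a2. f x) = (\<Sum>i\<in>{h..<h + int k + 1}. grading1_ext a1 a2 f i)"
    and "int (\<Sum>x\<in>window h k \<inter> D2 a1 a2. g x) = (\<Sum>i\<in>{h..<h + int k + 1}. grading2_ext a1 a2 g i)"
proof -
  note sum_east = sum_dyck_window[where P="dyck_east a1 a2", OF dyck_east_mod k]
  have "(\<not> east (x mod len)) = (\<not> east x)" for x using dyck_east_mod by simp
  note sum_north = sum_dyck_window[where P="\<lambda>x. \<not> dyck_east a1 a2 x", OF this k]
  have card_sum: "card X = (\<Sum>x\<in>X. (\<lambda>_. 1::nat) x)" for X :: "nat set" by simp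
  show "int (card (window h k \<inter> D1 a1 a2)) = (\<Sum>i\<in>{h..<h + int k + 1}. if east i then 1 else 0)"
    unfolding card_sum D1_eq sum_east by (intro sum.cong) auto
  show "int (card (window h k \<inter> D2 a1 a2)) = (\<Sum>i\<in>{h..<h + int k + 1}. if east i then 0 else 1)"
    unfolding card_sum D2_eq sum_north by (intro sum.cong) auto
  show "int (\<Sum>x\<in>window h k \<inter> D1 a1 a2. f x) = (\<Sum>i\<in>{h..<h + int k + 1}. grading1_ext a1 a2 f i)"
    unfolding D1_eq sum_east grading1_ext_def ..
  show "int (\<Sum>x\<in>window h k \<inter> D2 a1 a2. g x) = (\<Sum>i\<in>{h..<h + int k + 1}. grading2_ext a1 a2 g i)"
    unfolding D2_eq sum_north grading2_ext_def by (intro sum.cong) auto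
qed

lemma compatible_pair_windows:
  assumes cp: "compatible_pair a1 a2 S1 S2" and h: "east h" "\<not> east (h + int k)" "k < a1 + a2"
  shows "\<exists>t\<le>k.
      (t \<noteq> k \<and> card (window h t \<inter> D2 a1 a2) = (\<Sum>x\<in>window h t \<inter> D1 a1 a2. S1 x))
    \<or> (t \<noteq> 0 \<and> card (window (h + int t) (k - t) \<inter> D1 a1 a2)
          = (\<Sum>x\<in>window (h + int t) (k - t) \<inter> D2 a1 a2. S2 x))"
proof -
  let ?n = "a1 + a2" and ?pos = "\<lambda>x. nat (x mod len)"
  have "?pos h \<in> D1 a1 a2" "?pos (h + int k) \<in> D2 a1 a2"
    unfolding D1_eq D2_eq using nat_mod_len_less len_gt_0 dyck_east_mod h by simp_all
  then obtain e where e: "(e \<in> cyc ?n (?pos h) (?pos (h + int k)) \<and> e \<noteq> ?pos (h + int k) \<and>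
        card (cyc ?n (?pos h) e \<inter> D2 a1 a2) = (\<Sum>x \<in> cyc ?n (?pos h) e \<inter> D1 a1 a2. S1 x))
      \<or> (e \<in> cyc ?n (?pos h) (?pos (h + int k)) \<and> e \<noteq> ?pos h \<and>
        card (cyc ?n e (?pos (h + int k)) \<inter> D1 a1 a2) = (\<Sum>x \<in> cyc ?n e (?pos (h + int k)) \<inter> D2 a1 a2. S2 x))"
    using cp unfolding compatible_pair_def by blast
  then have "e \<in> window h k" unfolding dyck_window_def by blast
  then obtain t where t: "t \<le> k" "e = ?pos (h + int t)" unfolding dyck_window_eq_image[OF h(3)] by auto
  have "h + int t + int (k - t) = h + int k" using t by simp
  then have W: "window h t = cyc ?n (?pos h) e" "window (h + int t) (k - t) = cyc ?n e (?pos (h + int k))"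
    unfolding dyck_window_def t(2) by simp_all
  from e show ?thesis
  proof (elim disjE conjE)
    assume "e \<noteq> ?pos (h + int k)"
    then have "t \<noteq> k" using t(2) by blast
    assume "card (cyc ?n (?pos h) e \<inter> D2 a1 a2) = (\<Sum>x \<in> cyc ?n (?pos h) e \<inter> D1 a1 a2. S1 x)"
    then show ?thesis using \<open>t \<noteq> k\<close> t W(1) by (intro exI[of _ t] conjI disjI1) auto
  next
    assume "e \<noteq> ?pos h"
    then have "t \<noteq> 0" using t(2) by (metis add.right_neutral of_nat_0)
    assume "card (cyc ?n e (?pos (h + int k)) \<inter> D1 a1 a2)
        = (\<Sum>x \<in> cyc ?n e (?pos (h + int k)) \<inter> D2 a1 a2. S2 x)"
    then show ?thesis using \<open>t \<noteq> 0\<close> t W(2) by (intro exI[of _ t] conjI disjI2) auto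
  qed
qed

lemma compatible_pair_periodic:
  assumes cp: "compatible_pair a1 a2 S1 S2"
    and h: "east h" "\<not> east (h + m)" "0 \<le> m" "m < len"
  shows "(\<exists>e. h \<le> e \<and> e < h + m \<and>
            (\<Sum>i\<in>{h..<e+1}. if east i then - grading1_ext a1 a2 S1 i else 1) = 0)
    \<or> (\<exists>e. h < e \<and> e \<le> h + m \<and>
            (\<Sum>i\<in>{e..<h+m+1}. if east i then 1 else - grading2_ext a1 a2 S2 i) = 0)"
proof -
  define k where "k = nat m"
  have k: "k < a1 + a2" "m = int k" unfolding k_def using h by linarith+
  have if_neg: "(if east i then - x else 1) = (if east i then 0 else 1) - x"
    "(if east i then 1 else - y) = (if east i then 1 else 0) - y"
    if "\<not> east i \<Longrightarrow> x = 0" "east i \<Longrightarrow> y = 0" for i x y :: int using that by auto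
  obtain t where t: "t \<le> k"
    and cases: "(t \<noteq> k \<and> card (window h t \<inter> D2 a1 a2) = (\<Sum>x\<in>window h t \<inter> D1 a1 a2. S1 x))
      \<or> (t \<noteq> 0 \<and> card (window (h + int t) (k - t) \<inter> D1 a1 a2)
          = (\<Sum>x\<in>window (h + int t) (k - t) \<inter> D2 a1 a2. S2 x))"
    using compatible_pair_windows[OF cp h(1) _ k(1)] h(2) unfolding k(2) by blast
  have lt: "t < a1 + a2" "k - t < a1 + a2" and tail: "h + int t + int (k - t) = h + m"
    using t k by auto
  show ?thesis
    using cases
  proof
    assume c: "t \<noteq> k \<and> card (window h t \<inter> D2 a1 a2) = (\<Sum>x\<in>window h t \<inter> D1 a1 a2. S1 x)"
    then have "(\<Sum>i\<in>{h..<h + int t + 1}. if east i then - grading1_ext a1 a2 S1 i else 1) = 0"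
      using dyck_window_sums(2)[OF lt(1), of h] dyck_window_sums(3)[OF lt(1), where h=h and f=S1]
      by (simp add: if_neg grading1_ext_def sum_subtractf)
    then show ?thesis using c t k by (intro disjI1 exI[of _ "h + int t"]) auto
  next
    assume c: "t \<noteq> 0 \<and> card (window (h + int t) (k - t) \<inter> D1 a1 a2)
      = (\<Sum>x\<in>window (h + int t) (k - t) \<inter> D2 a1 a2. S2 x)"
    then have "(\<Sum>i\<in>{h + int t..<h + m + 1}. if east i then 1 else - grading2_ext a1 a2 S2 i) = 0"
      using dyck_window_sums(1)[OF lt(2), of "h + int t"] dyck_window_sums(4)[OF lt(2), where h="h + int t" and g=S2]
      unfolding tail by (simp add: if_neg grading2_ext_def sum_subtractf)
    then show ?thesis using c t k by (intro disjI2 exI[of _ "h + int t"]) auto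
  qed
qed

end

section \<open>Polygons in the plane\<close>

lemma convex_hull_mem_combination:
  fixes S :: "'a::real_vector set"
  assumes "a \<in> convex hull S" "b \<in> convex hull S" "0 \<le> u" "u \<le> 1" "p = (1 - u) *\<^sub>R a + u *\<^sub>R b"
  shows "p \<in> convex hull S"
  using convexD[OF convex_convex_hull assms(1,2), of "1 - u" u] assms by simp

lemma linear_swap: "linear (prod.swap :: real \<times> real \<Rightarrow> real \<times> real)"
  by (rule linearI) auto

lemma swap_mem_convex_hull:
  "prod.swap p \<in> convex hull S \<longleftrightarrow> p \<in> convex hull (prod.swap ` S :: (real \<times> real) set)"
  using convex_hull_linear_image[OF linear_swap, of S]
  by (metis (no_types, lifting) image_iff swap_swap)

lemma swap_mem_closed_segment:
  "prod.swap p \<in> closed_segment a b \<longleftrightarrow> p \<in> closed_segment (prod.swap a) (prod.swap b :: real \<times> real)"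
  using closed_segment_linear_image[OF linear_swap, of a b]
  by (metis (no_types, lifting) image_iff swap_swap)

lemma mem_trapezoid_cut_top:
  fixes X Y c x y :: real
  assumes "0 \<le> x" "0 \<le> y" "y \<le> Y" "0 \<le> c" "x + c * y \<le> X" "c * Y \<le> X"
  shows "(x, y) \<in> convex hull {(0, 0), (X, 0), (0, Y), (X - c * Y, Y)}"
proof -
  let ?H = "convex hull {(0::real, 0::real), (X, 0), (0, Y), (X - c * Y, Y)}"
  have vertices: "(0, 0) \<in> ?H" "(X, 0) \<in> ?H" "(0, Y) \<in> ?H" "(X - c * Y, Y) \<in> ?H"
    by (auto intro: hull_inc)
  have "(0, y) \<in> ?H \<and> (X - c * y, y) \<in> ?H"
  proof (cases "Y = 0")
    case True
    then show ?thesis using vertices assms by auto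
  next
    case False
    then have "0 < Y" using assms by simp
    have "(0, y) \<in> ?H"
      by (rule convex_hull_mem_combination[OF vertices(1,3), of "y / Y"])
        (use \<open>0 < Y\<close> assms in \<open>auto simp: prod_eq_iff\<close>)
    moreover have "(X - c * y, y) \<in> ?H"
      by (rule convex_hull_mem_combination[OF vertices(2,4), of "y / Y"])
        (use \<open>0 < Y\<close> assms in \<open>auto simp: prod_eq_iff field_simps\<close>)
    ultimately show ?thesis ..
  qed
  then have left: "(0, y) \<in> ?H" and right: "(X - c * y, y) \<in> ?H" by auto
  show ?thesis
  proof (cases "X - c * y = 0")
    case True
    then have "x = 0" using assms by simp
    then show ?thesis using left by simp
  next
    case False
    then have pos: "0 < X - c * y" using assms by simp
    define s where "s = x / (X - c * y)"
    have "0 \<le> s" "s \<le> 1" unfolding s_def using pos assms by auto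
    moreover have "(x, y) = (1 - s) *\<^sub>R (0, y) + s *\<^sub>R (X - c * y, y)"
    proof -
      have "s * (X - c * y) = x" unfolding s_def using pos by simp
      then show ?thesis by (auto simp: prod_eq_iff algebra_simps)
    qed
    ultimately show ?thesis by (intro convex_hull_mem_combination[OF left right]) auto
  qed
qed

lemma mem_trapezoid_cut_right:
  fixes X Y c x y :: real
  assumes "0 \<le> x" "0 \<le> y" "x \<le> X" "0 \<le> c" "y + c * x \<le> Y" "c * X \<le> Y"
  shows "(x, y) \<in> convex hull {(0, 0), (X, 0), (0, Y), (X, Y - c * X)}"
proof -
  have "(y, x) \<in> convex hull {(0, 0), (Y, 0), (0, X), (Y - c * X, X)}"
    using assms by (intro mem_trapezoid_cut_top) auto
  moreover have "prod.swap ` {(0, 0), (X, 0), (0, Y), (X, Y - c * X)} = {(0, 0), (Y, 0), (0, X), (Y - c * X, X)}"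
    by auto
  ultimately show ?thesis using swap_mem_convex_hull[of "(x, y)"] by (simp add: insert_commute)
qed

lemma mem_triangle:
  fixes X P Q x y :: real
  assumes "0 < P" "0 < Q" "P < X" "0 \<le> y" "P * y \<le> Q * x" "Q * x + (X - P) * y \<le> X * Q"
  shows "(x, y) \<in> convex hull {(0, 0), (X, 0), (P, Q)}"
proof -
  let ?u = "(Q * x - P * y) / (X * Q)" and ?v = "y / Q"
  have "?u + ?v = (Q * x + (X - P) * y) / (X * Q)" using assms by (simp add: field_simps)
  also have "\<dots> \<le> 1" using assms by (simp add: divide_le_eq_1)
  finally have "0 \<le> 1 - ?u - ?v" by simp
  moreover have "0 \<le> ?u" "0 \<le> ?v" using assms by simp_all
  moreover have "(x, y) = (1 - ?u - ?v) *\<^sub>R (0, 0) + ?u *\<^sub>R (X, 0) + ?v *\<^sub>R (P, Q)"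
    using assms by (auto simp: prod_eq_iff field_simps)
  ultimately show ?thesis
    unfolding convex_hull_3 mem_Collect_eq
    by (intro exI[of _ "1 - ?u - ?v"] exI[of _ ?u] exI[of _ ?v]) simp
qed

lemma mem_triangle_pair:
  fixes X Y P Q x y :: real
  assumes "0 < P" "0 < Q" "P < X" "Q < Y" "0 \<le> x" "0 \<le> y"
    and "P * y \<le> Q * x \<Longrightarrow> Q * x + (X - P) * y \<le> X * Q"
    and "Q * x \<le> P * y \<Longrightarrow> P * y + (Y - Q) * x \<le> Y * P"
  shows "(x, y) \<in> convex hull {(0, 0), (X, 0), (P, Q)} \<union> convex hull {(0, 0), (P, Q), (0, Y)}"
proof (cases "P * y \<le> Q * x")
  case True
  then show ?thesis using assms by (auto intro: mem_triangle)
next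
  case False
  then have "(y, x) \<in> convex hull {(0, 0), (Y, 0), (Q, P)}"
    using assms by (intro mem_triangle) (auto simp: mult.commute)
  moreover have "prod.swap ` {(0, 0), (P, Q), (0, Y)} = {(0, 0), (Q, P), (Y, 0)}" by auto
  ultimately show ?thesis using swap_mem_convex_hull[of "(x, y)"] by (simp add: insert_commute)
qed

lemma closed_segment_point:
  fixes X P Q x y :: real
  assumes "(x, y) \<in> closed_segment (X, 0) (P, Q)" "(x, y) \<noteq> (X, 0)" "0 < Q"
  shows "0 < y" "Q * x + (X - P) * y = X * Q" "Q \<le> y \<Longrightarrow> (x, y) = (P, Q)"
proof -
  obtain u where u: "0 \<le> u" "u \<le> 1" "(x, y) = (1 - u) *\<^sub>R (X, 0) + u *\<^sub>R (P, Q)"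
    using assms(1) unfolding closed_segment_def by auto
  have xy: "x = X - u * (X - P)" "y = u * Q" using u(3) by (auto simp: algebra_simps)
  then have "u \<noteq> 0" using assms(2) by auto
  then show "0 < y" using u(1) assms(3) xy by simp
  show "Q * x + (X - P) * y = X * Q" unfolding xy by (simp add: algebra_simps)
  show "(x, y) = (P, Q)" if "Q \<le> y"
  proof -
    have "u = 1" using that xy assms(3) u(2) by (simp add: mult_le_cancel_right1 not_less)
    then show ?thesis using xy by simp
  qed
qed

lemma mem_quadrilateral:
  fixes X Y P Q x y :: real
  assumes P: "0 < P" and Q: "0 < Q" and XP: "P < X" and YQ: "Q < Y"
    and x0: "0 \<le> x" and xX: "x \<le> X" and y0: "0 \<le> y" and yY: "y \<le> Y"
    and corner: "\<not> (P \<le> x \<and> Q \<le> y)"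
    and lower: "y < Q \<Longrightarrow> y = 0 \<or> Q * x + (X - P) * y < X * Q"
    and upper: "x < P \<Longrightarrow> x = 0 \<or> (Y - Q) * x + P * y < Y * P"
  shows "(x, y) \<in> (convex hull {(0, 0), (X, 0), (P, Q)} \<union> convex hull {(0, 0), (P, Q), (0, Y)})
      - ((closed_segment (X, 0) (P, Q) - {(X, 0)}) \<union> (closed_segment (0, Y) (P, Q) - {(0, Y)}))"
proof -
  have "(x, y) \<in> convex hull {(0, 0), (X, 0), (P, Q)} \<union> convex hull {(0, 0), (P, Q), (0, Y)}"
  proof (rule mem_triangle_pair[OF P Q XP YQ x0 y0])
    assume below: "P * y \<le> Q * x"
    show "Q * x + (X - P) * y \<le> X * Q"
    proof (cases "y < Q")
      case False
      then have "P * Q \<le> Q * x" using below P by (meson mult_left_mono not_less order_trans less_imp_le)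
      then show ?thesis using Q corner False by (simp add: mult.commute)
    qed (use lower xX Q in \<open>auto simp: mult.commute\<close>)
  next
    assume above: "Q * x \<le> P * y"
    show "P * y + (Y - Q) * x \<le> Y * P"
    proof (cases "x < P")
      case False
      then have "Q * P \<le> P * y" using above Q by (meson mult_left_mono not_less order_trans less_imp_le)
      then show ?thesis using P corner False by (simp add: mult.commute)
    qed (use upper yY P in \<open>auto simp: algebra_simps\<close>)
  qed
  moreover have "(x, y) \<notin> closed_segment (X, 0) (P, Q) - {(X, 0)}"
  proof
    assume "(x, y) \<in> closed_segment (X, 0) (P, Q) - {(X, 0)}"
    then have "0 < y" "Q * x + (X - P) * y = X * Q" "Q \<le> y \<Longrightarrow> (x, y) = (P, Q)"
      using closed_segment_point[of x y X P Q] Q by auto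
    then show False using lower corner by (cases "y < Q") auto
  qed
  moreover have "(x, y) \<notin> closed_segment (0, Y) (P, Q) - {(0, Y)}"
  proof
    assume "(x, y) \<in> closed_segment (0, Y) (P, Q) - {(0, Y)}"
    then have "(y, x) \<in> closed_segment (Y, 0) (Q, P)" "(y, x) \<noteq> (Y, 0)"
      using swap_mem_closed_segment[of "(y, x)" "(0, Y)" "(P, Q)"] by auto
    then have "0 < x" "P * y + (Y - Q) * x = Y * P" "P \<le> x \<Longrightarrow> (y, x) = (Q, P)"
      using closed_segment_point[of y x Y Q P] P by auto
    then show False using upper corner by (cases "x < P") (auto simp: algebra_simps)
  qed
  ultimately show ?thesis by blast
qed

section \<open>Bounds on the sizes of compatible gradings\<close>

locale compatible_grading = dyck_path +
  fixes d1 d2 :: nat and S1 S2 :: "nat \<Rightarrow> nat"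
  assumes compatible: "compatible_pair a1 a2 S1 S2"
    and S1_le: "\<forall>h \<in> D1 a1 a2. S1 h \<le> d1"
    and S2_le: "\<forall>v \<in> D2 a1 a2. S2 v \<le> d2"
begin

lemma grading1_ext_le: "grading1_ext a1 a2 S1 i \<le> int d1"
proof (cases "east i")
  case True
  then have "nat (i mod len) \<in> D1 a1 a2"
    unfolding D1_eq int_nat_mod_len
    using nat_mod_len_less dyck_east_mod len_gt_0 by simp
  then show ?thesis using S1_le True unfolding grading1_ext_def by simp
qed (simp add: grading1_ext_def)

lemma grading2_ext_le: "grading2_ext a1 a2 S2 i \<le> int d2"
proof (cases "east i")
  case False
  then have "nat (i mod len) \<in> D2 a1 a2"
    unfolding D2_eq int_nat_mod_len
    using nat_mod_len_less dyck_east_mod len_gt_0 by simp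
  then show ?thesis using S2_le False unfolding grading2_ext_def by simp
qed (simp add: grading2_ext_def)

interpretation dyck: periodic_graded_path len east
  "grading1_ext a1 a2 S1" "grading2_ext a1 a2 S2" "int a1" "int a2" "int d1"
proof (unfold_locales)
  show "0 < len" by (rule len_gt_0)
  show periodic: "\<And>i. east (i + len) = east i"
    by (rule dyck_east_periodic)
  show "\<And>i. grading1_ext a1 a2 S1 (i + len) = grading1_ext a1 a2 S1 i"
    and "\<And>i. grading2_ext a1 a2 S2 (i + len) = grading2_ext a1 a2 S2 i"
    unfolding grading1_ext_def grading2_ext_def using periodic by simp_all
  show "\<And>i. 0 \<le> grading1_ext a1 a2 S1 i" "\<And>i. 0 \<le> grading2_ext a1 a2 S2 i"
    "\<And>i. \<not> east i \<Longrightarrow> grading1_ext a1 a2 S1 i = 0"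
    "\<And>i. east i \<Longrightarrow> grading2_ext a1 a2 S2 i = 0"
    unfolding grading1_ext_def grading2_ext_def by simp_all
  show "\<And>i. grading1_ext a1 a2 S1 i \<le> int d1" by (rule grading1_ext_le)
  show "int a1 = (\<Sum>i\<in>{0..<len}. if east i then 1 else 0)"
    using dyck_east_count by simp
  show "int a2 = len - int a1" by simp
  show "\<And>h m. east h \<Longrightarrow> \<not> east (h + m) \<Longrightarrow> 0 \<le> m \<Longrightarrow> m < len \<Longrightarrow>
      (\<exists>e. h \<le> e \<and> e < h + m \<and>
          (\<Sum>i\<in>{h..<e+1}. if east i then - grading1_ext a1 a2 S1 i else 1) = 0)
    \<or> (\<exists>e. h < e \<and> e \<le> h + m \<and>
          (\<Sum>i\<in>{e..<h+m+1}. if east i then 1 else - grading2_ext a1 a2 S2 i) = 0)"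
    by (rule compatible_pair_periodic[OF compatible])
  show "\<And>p q. p \<le> q \<Longrightarrow> east p \<Longrightarrow> \<not> east q \<Longrightarrow>
      int a1 * (\<Sum>i\<in>{p..<q+1}. if east i then 0 else 1)
        \<le> int a2 * (\<Sum>i\<in>{p..<q+1}. if east i then 1 else 0) + int a1 - 1"
    by (rule dyck_chord_lower)
qed

interpretation dyck_rev: periodic_graded_path len "\<lambda>i. \<not> east (- i)"
  "\<lambda>i. grading2_ext a1 a2 S2 (- i)" "\<lambda>i. grading1_ext a1 a2 S1 (- i)" "int a2" "int a1" "int d2"
  using periodic_graded_path_reflect[OF dyck.periodic_graded_path_axioms grading2_ext_le
      dyck_chord_upper] .

lemma grading_size1_eq: "int (grading_size1 a1 a2 S1) = (\<Sum>i\<in>{0..<len}. grading1_ext a1 a2 S1 i)"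
proof -
  have "(\<Sum>i\<in>{0..<len}. grading1_ext a1 a2 S1 i) = (\<Sum>j\<in>{0..<a1+a2}. grading1_ext a1 a2 S1 (int j))"
    by (rule sum.reindex_bij_witness[of _ int nat]) auto
  also have "\<dots> = (\<Sum>j\<in>{0..<a1+a2} \<inter> D1 a1 a2. int (S1 j))"
    unfolding sum.inter_restrict[OF finite_atLeastLessThan] grading1_ext_def D1_eq
    by (intro sum.cong) (auto simp: of_nat_mod[symmetric])
  also have "{0..<a1+a2} \<inter> D1 a1 a2 = D1 a1 a2" unfolding D1_def by auto
  finally show ?thesis unfolding grading_size1_def by simp
qed

lemma grading_size2_eq: "int (grading_size2 a1 a2 S2) = (\<Sum>i\<in>{0..<len}. grading2_ext a1 a2 S2 i)"
proof -
  have "(\<Sum>i\<in>{0..<len}. grading2_ext a1 a2 S2 i) = (\<Sum>j\<in>{0..<a1+a2}. grading2_ext a1 a2 S2 (int j))"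
    by (rule sum.reindex_bij_witness[of _ int nat]) auto
  also have "\<dots> = (\<Sum>j\<in>{0..<a1+a2} \<inter> D2 a1 a2. int (S2 j))"
    unfolding sum.inter_restrict[OF finite_atLeastLessThan] grading2_ext_def D2_eq
    by (intro sum.cong) (auto simp: of_nat_mod[symmetric])
  also have "{0..<a1+a2} \<inter> D2 a1 a2 = D2 a1 a2" unfolding D2_def by auto
  finally show ?thesis unfolding grading_size2_def by simp
qed

lemma grading_sizes_reflect:
  "(\<Sum>i\<in>{0..<len}. grading1_ext a1 a2 S1 (- i)) = int (grading_size1 a1 a2 S1)"
  "(\<Sum>i\<in>{0..<len}. grading2_ext a1 a2 S2 (- i)) = int (grading_size2 a1 a2 S2)"
  unfolding grading_size1_eq grading_size2_eq
  using dyck.A_periodic dyck.B_periodic dyck.N_pos by (auto intro: periodic_sum_reflect)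

lemma grading_sizes_le:
  "grading_size1 a1 a2 S1 \<le> d1 * a1" "grading_size2 a1 a2 S2 \<le> d2 * a2"
  using dyck.sum_A_le dyck_rev.sum_A_le
  unfolding grading_size1_eq[symmetric] grading_sizes_reflect
  by (simp_all only: of_nat_mult[symmetric] of_nat_le_iff)

lemma grading_sizes_bound_a:
  assumes "d2 * a2 \<le> a1"
  shows "int (grading_size1 a1 a2 S1) \<le> int d1 * (int a1 - int (grading_size2 a1 a2 S2))"
proof -
  have "dyck.east_runs"
    unfolding dyck.east_runs_def
  proof (intro allI impI)
    fix v j assume "\<not> east v" "1 \<le> j" "j \<le> grading2_ext a1 a2 S2 v"
    moreover have "int d2 * int a2 \<le> int a1" using assms by (metis of_nat_le_iff of_nat_mult)
    ultimately show "east (v - j)"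
      using dyck_east_before_north grading2_ext_le[of v] by (meson order_trans)
  qed
  from dyck.sum_A_bound_by_runs[OF this] show ?thesis
    unfolding grading_size1_eq grading_size2_eq .
qed

lemma grading_sizes_bound_b:
  assumes "d1 * a1 \<le> a2"
  shows "int (grading_size2 a1 a2 S2) \<le> int d2 * (int a2 - int (grading_size1 a1 a2 S1))"
proof -
  have "dyck_rev.east_runs"
    unfolding dyck_rev.east_runs_def
  proof (intro allI impI)
    fix v j assume "\<not> \<not> east (- v)" "1 \<le> j" "j \<le> grading1_ext a1 a2 S1 (- v)"
    moreover have "int d1 * int a1 \<le> int a2" using assms by (metis of_nat_le_iff of_nat_mult)
    ultimately have "\<not> east (- v + j)"
      using dyck_north_after_east grading1_ext_le[of "- v"] by (meson order_trans)
    then show "\<not> east (- (v - j))" by simp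
  qed
  from dyck_rev.sum_A_bound_by_runs[OF this] show ?thesis
    unfolding grading_sizes_reflect .
qed

lemma grading_sizes_bound_c:
  shows "0 < a1 \<Longrightarrow> 0 < grading_size2 a1 a2 S2 \<Longrightarrow>
      \<exists>m. min (int (grading_size2 a1 a2 S2)) (int a1) \<le> m \<and> m \<le> int a1 \<and>
        int a1 * int (grading_size1 a1 a2 S1) \<le> int d1 * int a1 * (int a1 - m) + int a2 * m - 1"
    and "0 < a2 \<Longrightarrow> 0 < grading_size1 a1 a2 S1 \<Longrightarrow>
      \<exists>m. min (int (grading_size1 a1 a2 S1)) (int a2) \<le> m \<and> m \<le> int a2 \<and>
        int a2 * int (grading_size2 a1 a2 S2) \<le> int d2 * int a2 * (int a2 - m) + int a1 * m - 1"
  using dyck.sum_A_bound_by_covering dyck_rev.sum_A_bound_by_covering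
  unfolding grading_size1_eq[symmetric] grading_size2_eq[symmetric] grading_sizes_reflect by simp_all

lemma grading_sizes_in_trapezoid_a:
  assumes "d2 * a2 \<le> a1"
  shows "(real (grading_size1 a1 a2 S1), real (grading_size2 a1 a2 S2)) \<in>
    convex hull {(0, 0), (real (d1 * a1), 0), (0, real (d2 * a2)),
                 (real (d1 * a1) - real (d1 * d2 * a2), real (d2 * a2))}"
proof -
  let ?g1 = "grading_size1 a1 a2 S1" and ?g2 = "grading_size2 a1 a2 S2"
  have "real_of_int (int ?g1) \<le> real_of_int (int d1 * (int a1 - int ?g2))"
    using grading_sizes_bound_a[OF assms] by (simp only: of_int_le_iff)
  then have "real ?g1 + real d1 * real ?g2 \<le> real (d1 * a1)" by (simp add: algebra_simps)
  moreover have "real ?g2 \<le> real (d2 * a2)" using grading_sizes_le(2) by (simp only: of_nat_le_iff)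
  moreover have "real d1 * real (d2 * a2) \<le> real (d1 * a1)"
    using assms by (metis mult_le_mono2 of_nat_le_iff of_nat_mult)
  moreover have "real (d1 * d2 * a2) = real d1 * real (d2 * a2)" by simp
  ultimately show ?thesis by (metis mem_trapezoid_cut_top of_nat_0_le_iff)
qed

lemma grading_sizes_in_trapezoid_b:
  assumes "d1 * a1 \<le> a2"
  shows "(real (grading_size1 a1 a2 S1), real (grading_size2 a1 a2 S2)) \<in>
    convex hull {(0, 0), (real (d1 * a1), 0), (0, real (d2 * a2)),
                 (real (d1 * a1), real (d2 * a2) - real (d1 * d2 * a1))}"
proof -
  let ?g1 = "grading_size1 a1 a2 S1" and ?g2 = "grading_size2 a1 a2 S2"
  have "real_of_int (int ?g2) \<le> real_of_int (int d2 * (int a2 - int ?g1))"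
    using grading_sizes_bound_b[OF assms] by (simp only: of_int_le_iff)
  then have "real ?g2 + real d2 * real ?g1 \<le> real (d2 * a2)" by (simp add: algebra_simps)
  moreover have "real ?g1 \<le> real (d1 * a1)" using grading_sizes_le(1) by (simp only: of_nat_le_iff)
  moreover have "real d2 * real (d1 * a1) \<le> real (d2 * a2)"
    using assms by (metis mult_le_mono2 of_nat_le_iff of_nat_mult)
  moreover have "real (d1 * d2 * a1) = real d2 * real (d1 * a1)" by simp
  ultimately show ?thesis by (metis mem_trapezoid_cut_right of_nat_0_le_iff)
qed

text \<open>Beyond the corner \<open>(a2, a1)\<close> the covering bound holds with \<open>m = a1\<close>, i.e.
  \<open>a1 |S1| < a2 a1\<close>, contradicting \<open>|S1| \<ge> a2\<close>.\<close>

lemma grading_sizes_below_corner: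
  assumes "0 < a1"
  shows "\<not> (a2 \<le> grading_size1 a1 a2 S1 \<and> a1 \<le> grading_size2 a1 a2 S2)"
proof
  let ?s1 = "int (grading_size1 a1 a2 S1)" and ?s2 = "int (grading_size2 a1 a2 S2)"
  assume c: "a2 \<le> grading_size1 a1 a2 S1 \<and> a1 \<le> grading_size2 a1 a2 S2"
  then obtain m where m: "min ?s2 (int a1) \<le> m" "m \<le> int a1"
      "int a1 * ?s1 \<le> int d1 * int a1 * (int a1 - m) + int a2 * m - 1"
    using grading_sizes_bound_c(1) assms by fastforce
  have "m = int a1" using m c by simp
  then have "int a1 * ?s1 \<le> int a2 * int a1 - 1" using m by (simp add: algebra_simps)
  moreover have "int a1 * int a2 \<le> int a1 * ?s1" using c by (intro mult_left_mono) auto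
  ultimately show False by (simp add: algebra_simps)
qed

text \<open>Since \<open>m \<ge> |S2|\<close> and \<open>d1 a1 > a2\<close>, the right-hand side of the covering bound
  \<open>a1 |S1| < d1 a1 (a1 - m) + a2 m\<close> is at most its value at \<open>m = |S2|\<close>.\<close>

lemma grading_sizes_below_lower_edge:
  assumes "0 < a1" "a2 < d1 * a1" "0 < grading_size2 a1 a2 S2" "grading_size2 a1 a2 S2 < a1"
  shows "real a1 * real (grading_size1 a1 a2 S1) + (real (d1 * a1) - real a2) * real (grading_size2 a1 a2 S2)
    < real (d1 * a1) * real a1"
proof -
  let ?s1 = "int (grading_size1 a1 a2 S1)" and ?s2 = "int (grading_size2 a1 a2 S2)"
  obtain m where m: "min ?s2 (int a1) \<le> m" "m \<le> int a1"
      "int a1 * ?s1 \<le> int d1 * int a1 * (int a1 - m) + int a2 * m - 1"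
    using grading_sizes_bound_c(1) assms by fastforce
  have "(int d1 * int a1 - int a2) * ?s2 \<le> (int d1 * int a1 - int a2) * m"
    using m(1) assms(2,4) by (intro mult_left_mono) (auto simp flip: of_nat_mult)
  then have "int a1 * ?s1 + (int d1 * int a1 - int a2) * ?s2 < int d1 * int a1 * int a1"
    using m(3) by (simp add: algebra_simps)
  then have "real_of_int (int a1 * ?s1 + (int d1 * int a1 - int a2) * ?s2)
      < real_of_int (int d1 * int a1 * int a1)" by (simp only: of_int_less_iff)
  then show ?thesis by simp
qed

lemma grading_sizes_below_upper_edge:
  assumes "0 < a2" "a1 < d2 * a2" "0 < grading_size1 a1 a2 S1" "grading_size1 a1 a2 S1 < a2"
  shows "(real (d2 * a2) - real a1) * real (grading_size1 a1 a2 S1) + real a2 * real (grading_size2 a1 a2 S2)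
    < real (d2 * a2) * real a2"
proof -
  let ?s1 = "int (grading_size1 a1 a2 S1)" and ?s2 = "int (grading_size2 a1 a2 S2)"
  obtain m where m: "min ?s1 (int a2) \<le> m" "m \<le> int a2"
      "int a2 * ?s2 \<le> int d2 * int a2 * (int a2 - m) + int a1 * m - 1"
    using grading_sizes_bound_c(2) assms by fastforce
  have "(int d2 * int a2 - int a1) * ?s1 \<le> (int d2 * int a2 - int a1) * m"
    using m(1) assms(2,4) by (intro mult_left_mono) (auto simp flip: of_nat_mult)
  then have "(int d2 * int a2 - int a1) * ?s1 + int a2 * ?s2 < int d2 * int a2 * int a2"
    using m(3) by (simp add: algebra_simps)
  then have "real_of_int ((int d2 * int a2 - int a1) * ?s1 + int a2 * ?s2)
      < real_of_int (int d2 * int a2 * int a2)" by (simp only: of_int_less_iff)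
  then show ?thesis by simp
qed

lemma grading_sizes_in_quadrilateral:
  assumes "0 < a1" "a1 < d2 * a2" "0 < a2" "a2 < d1 * a1"
  shows "(real (grading_size1 a1 a2 S1), real (grading_size2 a1 a2 S2)) \<in>
        (convex hull {(0, 0), (real (d1 * a1), 0), (real a2, real a1)}
         \<union> convex hull {(0, 0), (real a2, real a1), (0, real (d2 * a2))})
        - ((closed_segment (real (d1 * a1), 0) (real a2, real a1) - {(real (d1 * a1), 0)})
           \<union> (closed_segment (0, real (d2 * a2)) (real a2, real a1) - {(0, real (d2 * a2))}))"
proof (rule mem_quadrilateral)
  show "real (grading_size1 a1 a2 S1) \<le> real (d1 * a1)" "real (grading_size2 a1 a2 S2) \<le> real (d2 * a2)"
    using grading_sizes_le by (simp_all only: of_nat_le_iff)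
  show "\<not> (real a2 \<le> real (grading_size1 a1 a2 S1) \<and> real a1 \<le> real (grading_size2 a1 a2 S2))"
    using grading_sizes_below_corner assms(1) by simp
  show "real (grading_size2 a1 a2 S2) = 0 \<or> real a1 * real (grading_size1 a1 a2 S1)
      + (real (d1 * a1) - real a2) * real (grading_size2 a1 a2 S2) < real (d1 * a1) * real a1"
    if "real (grading_size2 a1 a2 S2) < real a1"
    using grading_sizes_below_lower_edge assms that by (cases "grading_size2 a1 a2 S2 = 0") auto
  show "real (grading_size1 a1 a2 S1) = 0 \<or> (real (d2 * a2) - real a1) * real (grading_size1 a1 a2 S1)
      + real a2 * real (grading_size2 a1 a2 S2) < real (d2 * a2) * real a2"
    if "real (grading_size1 a1 a2 S1) < real a2"
    using grading_sizes_below_upper_edge assms that by (cases "grading_size1 a1 a2 S1 = 0") auto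
qed (use assms in \<open>simp_all only: of_nat_less_iff of_nat_0_less_iff of_nat_0_le_iff\<close>)

end

theorem proposition4p22:
  fixes d1 d2 a1 a2 :: nat and S1 S2 :: "nat \<Rightarrow> nat"
  assumes "compatible_pair a1 a2 S1 S2"
    and "\<forall>h \<in> D1 a1 a2. S1 h \<le> d1"
    and "\<forall>v \<in> D2 a1 a2. S2 v \<le> d2"
  shows
   "(d2 * a2 \<le> a1 \<longrightarrow>
      (real (grading_size1 a1 a2 S1), real (grading_size2 a1 a2 S2)) \<in>
        convex hull {(0, 0), (real (d1 * a1), 0), (0, real (d2 * a2)),
                     (real (d1 * a1) - real (d1 * d2 * a2), real (d2 * a2))})
    \<and> (d1 * a1 \<le> a2 \<longrightarrow>
      (real (grading_size1 a1 a2 S1), real (grading_size2 a1 a2 S2)) \<in>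
        convex hull {(0, 0), (real (d1 * a1), 0), (0, real (d2 * a2)),
                     (real (d1 * a1), real (d2 * a2) - real (d1 * d2 * a1))})
    \<and> (0 < a1 \<and> a1 < d2 * a2 \<and> 0 < a2 \<and> a2 < d1 * a1 \<longrightarrow>
      (real (grading_size1 a1 a2 S1), real (grading_size2 a1 a2 S2)) \<in>
        (convex hull {(0, 0), (real (d1 * a1), 0), (real a2, real a1)}
         \<union> convex hull {(0, 0), (real a2, real a1), (0, real (d2 * a2))})
        - ((closed_segment (real (d1 * a1), 0) (real a2, real a1) - {(real (d1 * a1), 0)})
           \<union> (closed_segment (0, real (d2 * a2)) (real a2, real a1) - {(0, real (d2 * a2))})))"
proof (cases "a1 + a2 = 0")
  case True
  then have "grading_size1 a1 a2 S1 = 0" "grading_size2 a1 a2 S2 = 0"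
    unfolding grading_size1_def grading_size2_def D1_def D2_def by auto
  then show ?thesis using True by (auto intro: hull_inc)
next
  case False
  then interpret compatible_grading a1 a2 d1 d2 S1 S2
    using assms by unfold_locales simp_all
  show ?thesis
    using grading_sizes_in_trapezoid_a grading_sizes_in_trapezoid_b grading_sizes_in_quadrilateral
    by blast
qed

end
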